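(* Let $C\to B'\to B$ be resolving morphisms of resolving algebras such that $B'$ is finite over $C$ and $B$ has a basis over $B'$ consisting of one element $x$ of degree $r\le0$ (so $dx\in B'$). Let $A$ be a dg algebra with a fixed morphism $C\to A$. Then the map $\pi_0\mathbf{Hom}_C(B',A)\to h^{r+1}(A)$, $[h]\mapsto[h(dx)]$, is well defined and the sequence $$\pi_0\mathbf{Hom}_C(B,A)\longrightarrow\pi_0\mathbf{Hom}_C(B',A)\longrightarrow h^{r+1}(A)$$ is exact in the middle: an element of $\pi_0\mathbf{Hom}_C(B',A)$ lies in the image of the first map if and only if it maps to $0$ in $h^{r+1}(A)$.
   Context: $k$ is a field of characteristic $0$; dg algebras are graded-commutative unital $k$-algebras with differential of degree $+1$. $C\to B$ is resolving if $B^\natural\cong C^\natural\otimes_kk[x_i]$ for homogeneous $x_i$ of degree $\le0$; finite if the basis can be chosen finite; resolving algebras are those resolving over $k$. $\Omega_n$: algebraic de Rham complex of $\mathrm{Spec}\,k[t_0,\dots,t_n]/(\sum t_i-1)$; $\mathbf{Hom}(B,A)$ is the simplicial set with $n$-simplices the dg morphisms $B\to A\otimes_k\Omega_n$; $\mathbf{Hom}_C(B,A)$ is the fibre of $\mathbf{Hom}(B,A)\to\mathbf{Hom}(C,A)$ over the fixed vertex $C\to A$; $\pi_0$ denotes the set of homotopy classes of vertices; the first map is restriction along $B'\subset B$. *)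

theory Defs
  imports Main "HOL-Library.Multiset"
begin

text \<open>A dg algebra is given by its homogeneous pieces dg_elems A n (n :: int), sharing a
common zero, with addition, scalar multiplication by 'k, multiplication, unit and
differential of degree +1.\<close>

record ('k, 'a) dga =
  dg_elems :: "int \<Rightarrow> 'a set"
  dg_zero  :: 'a
  dg_one   :: 'a
  dg_add   :: "'a \<Rightarrow> 'a \<Rightarrow> 'a"
  dg_smul  :: "'k \<Rightarrow> 'a \<Rightarrow> 'a"
  dg_mul   :: "'a \<Rightarrow> 'a \<Rightarrow> 'a"
  dg_d     :: "'a \<Rightarrow> 'a"

definition dg_carrier :: "('k, 'a) dga \<Rightarrow> 'a set" where
  "dg_carrier A = (\<Union>n. dg_elems A n)"

definition sgn_int :: "int \<Rightarrow> 'k::field" where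
  "sgn_int n = (if even n then 1 else -1)"

definition dga :: "('k::field_char_0, 'a) dga \<Rightarrow> bool" where
  "dga A \<longleftrightarrow>
     (\<forall>n. dg_zero A \<in> dg_elems A n) \<and>
     (\<forall>m n. m \<noteq> n \<longrightarrow> dg_elems A m \<inter> dg_elems A n \<subseteq> {dg_zero A}) \<and>
     \<comment> \<open>each piece is a k-vector space\<close>
     (\<forall>n. \<forall>a\<in>dg_elems A n. \<forall>b\<in>dg_elems A n. dg_add A a b \<in> dg_elems A n) \<and>
     (\<forall>n c. \<forall>a\<in>dg_elems A n. dg_smul A c a \<in> dg_elems A n) \<and>
     (\<forall>n. \<forall>a\<in>dg_elems A n. \<forall>b\<in>dg_elems A n. \<forall>e\<in>dg_elems A n.
         dg_add A (dg_add A a b) e = dg_add A a (dg_add A b e)) \<and>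
     (\<forall>n. \<forall>a\<in>dg_elems A n. \<forall>b\<in>dg_elems A n. dg_add A a b = dg_add A b a) \<and>
     (\<forall>n. \<forall>a\<in>dg_elems A n. dg_add A a (dg_zero A) = a) \<and>
     (\<forall>n. \<forall>a\<in>dg_elems A n. dg_add A a (dg_smul A (-1) a) = dg_zero A) \<and>
     (\<forall>n c. \<forall>a\<in>dg_elems A n. \<forall>b\<in>dg_elems A n.
         dg_smul A c (dg_add A a b) = dg_add A (dg_smul A c a) (dg_smul A c b)) \<and>
     (\<forall>n c c'. \<forall>a\<in>dg_elems A n.
         dg_smul A (c + c') a = dg_add A (dg_smul A c a) (dg_smul A c' a)) \<and>
     (\<forall>n c c'. \<forall>a\<in>dg_elems A n. dg_smul A (c * c') a = dg_smul A c (dg_smul A c' a)) \<and>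
     (\<forall>n. \<forall>a\<in>dg_elems A n. dg_smul A 1 a = a) \<and>
     \<comment> \<open>graded-commutative unital associative k-algebra\<close>
     (\<forall>m n. \<forall>a\<in>dg_elems A m. \<forall>b\<in>dg_elems A n. dg_mul A a b \<in> dg_elems A (m + n)) \<and>
     (\<forall>m n. \<forall>a\<in>dg_elems A m. \<forall>b\<in>dg_elems A m. \<forall>e\<in>dg_elems A n.
         dg_mul A (dg_add A a b) e = dg_add A (dg_mul A a e) (dg_mul A b e)) \<and>
     (\<forall>m n c. \<forall>a\<in>dg_elems A m. \<forall>e\<in>dg_elems A n.
         dg_mul A (dg_smul A c a) e = dg_smul A c (dg_mul A a e)) \<and>
     (\<forall>l m n. \<forall>a\<in>dg_elems A l. \<forall>b\<in>dg_elems A m. \<forall>e\<in>dg_elems A n.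
         dg_mul A (dg_mul A a b) e = dg_mul A a (dg_mul A b e)) \<and>
     dg_one A \<in> dg_elems A 0 \<and>
     (\<forall>n. \<forall>a\<in>dg_elems A n. dg_mul A (dg_one A) a = a) \<and>
     (\<forall>m n. \<forall>a\<in>dg_elems A m. \<forall>b\<in>dg_elems A n.
         dg_mul A a b = dg_smul A (sgn_int (m * n)) (dg_mul A b a)) \<and>
     \<comment> \<open>differential of degree +1\<close>
     (\<forall>n. \<forall>a\<in>dg_elems A n. dg_d A a \<in> dg_elems A (n + 1)) \<and>
     (\<forall>n. \<forall>a\<in>dg_elems A n. \<forall>b\<in>dg_elems A n. dg_d A (dg_add A a b) = dg_add A (dg_d A a) (dg_d A b)) \<and>
     (\<forall>n c. \<forall>a\<in>dg_elems A n. dg_d A (dg_smul A c a) = dg_smul A c (dg_d A a)) \<and>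
     (\<forall>n. \<forall>a\<in>dg_elems A n. dg_d A (dg_d A a) = dg_zero A) \<and>
     (\<forall>m n. \<forall>a\<in>dg_elems A m. \<forall>b\<in>dg_elems A n.
         dg_d A (dg_mul A a b) =
           dg_add A (dg_mul A (dg_d A a) b) (dg_smul A (sgn_int m) (dg_mul A a (dg_d A b))))"

definition gdeg :: "('k, 'a) dga \<Rightarrow> 'a \<Rightarrow> int" where
  "gdeg A a = (SOME n. a \<in> dg_elems A n)"

definition esgn :: "('k::field, 'a) dga \<Rightarrow> 'a \<Rightarrow> 'k" where
  "esgn A a = sgn_int (gdeg A a)"

text \<open>Morphisms of dg algebras (considered on the carrier only).\<close>
definition dgmor :: "('k::field_char_0, 'a) dga \<Rightarrow> ('k, 'b) dga \<Rightarrow> ('a \<Rightarrow> 'b) \<Rightarrow> bool" where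
  "dgmor A B f \<longleftrightarrow>
     (\<forall>n. \<forall>a\<in>dg_elems A n. f a \<in> dg_elems B n) \<and>
     (\<forall>n. \<forall>a\<in>dg_elems A n. \<forall>b\<in>dg_elems A n. f (dg_add A a b) = dg_add B (f a) (f b)) \<and>
     (\<forall>n c. \<forall>a\<in>dg_elems A n. f (dg_smul A c a) = dg_smul B c (f a)) \<and>
     (\<forall>m n. \<forall>a\<in>dg_elems A m. \<forall>b\<in>dg_elems A n. f (dg_mul A a b) = dg_mul B (f a) (f b)) \<and>
     f (dg_one A) = dg_one B \<and>
     (\<forall>n. \<forall>a\<in>dg_elems A n. f (dg_d A a) = dg_d B (f a))"

fun lsum :: "('k, 'a) dga \<Rightarrow> 'a list \<Rightarrow> 'a" where
  "lsum A [] = dg_zero A"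
| "lsum A (a # as) = dg_add A a (lsum A as)"

definition vsum :: "('k, 'a) dga \<Rightarrow> ('i \<Rightarrow> 'a) \<Rightarrow> 'i set \<Rightarrow> 'a" where
  "vsum A f S = lsum A (map f (SOME l. distinct l \<and> set l = S))"

text \<open>Monomials in generators X \<subseteq> B are finite multisets over X (odd generators with
multiplicity at most 1); their value is the product in some fixed order.\<close>

definition mon :: "('k, 'b) dga \<Rightarrow> 'b multiset \<Rightarrow> 'b" where
  "mon B m = foldr (dg_mul B) (SOME l. mset l = m) (dg_one B)"

definition mdeg :: "('k, 'b) dga \<Rightarrow> 'b multiset \<Rightarrow> int" where
  "mdeg B m = sum_mset (image_mset (gdeg B) m)"

definition adm_mon :: "('k, 'b) dga \<Rightarrow> 'b set \<Rightarrow> 'b multiset \<Rightarrow> bool" where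
  "adm_mon B X m \<longleftrightarrow> set_mset m \<subseteq> X \<and> (\<forall>x\<in>X. odd (gdeg B x) \<longrightarrow> count m x \<le> 1)"

text \<open>B-natural iso C-natural \<otimes>_k k[X] (free graded-commutative C-algebra on X), written out:
every homogeneous element of B is uniquely a C-linear combination of monomials in X.\<close>
definition free_on :: "('k, 'c) dga \<Rightarrow> ('k, 'b) dga \<Rightarrow> ('c \<Rightarrow> 'b) \<Rightarrow> 'b set \<Rightarrow> bool" where
  "free_on C B \<phi> X \<longleftrightarrow>
     X \<subseteq> dg_carrier B \<and> (\<forall>x\<in>X. x \<noteq> dg_zero B) \<and>
     (\<forall>n. \<forall>b\<in>dg_elems B n. \<exists>!c :: 'b multiset \<Rightarrow> 'c.
        (\<forall>m. c m \<in> dg_elems C (n - mdeg B m)) \<and>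
        finite {m. c m \<noteq> dg_zero C} \<and>
        (\<forall>m. c m \<noteq> dg_zero C \<longrightarrow> adm_mon B X m) \<and>
        b = vsum B (\<lambda>m. dg_mul B (\<phi> (c m)) (mon B m)) {m. c m \<noteq> dg_zero C})"

definition resolving_on :: "('k::field_char_0, 'c) dga \<Rightarrow> ('k, 'b) dga \<Rightarrow> ('c \<Rightarrow> 'b) \<Rightarrow> 'b set \<Rightarrow> bool" where
  "resolving_on C B \<phi> X \<longleftrightarrow> dgmor C B \<phi> \<and> (\<forall>x\<in>X. \<exists>n\<le>0. x \<in> dg_elems B n) \<and> free_on C B \<phi> X"

definition resolving :: "('k::field_char_0, 'c) dga \<Rightarrow> ('k, 'b) dga \<Rightarrow> ('c \<Rightarrow> 'b) \<Rightarrow> bool" where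
  "resolving C B \<phi> \<longleftrightarrow> (\<exists>X. resolving_on C B \<phi> X)"

definition finite_resolving :: "('k::field_char_0, 'c) dga \<Rightarrow> ('k, 'b) dga \<Rightarrow> ('c \<Rightarrow> 'b) \<Rightarrow> bool" where
  "finite_resolving C B \<phi> \<longleftrightarrow> (\<exists>X. finite X \<and> resolving_on C B \<phi> X)"

definition kdga :: "('k::field_char_0, 'k) dga" where
  "kdga = \<lparr> dg_elems = (\<lambda>n. if n = 0 then UNIV else {0}), dg_zero = 0, dg_one = 1,
            dg_add = (+), dg_smul = (*), dg_mul = (*), dg_d = (\<lambda>_. 0) \<rparr>"

definition unit_map :: "('k, 'b) dga \<Rightarrow> 'k \<Rightarrow> 'b" where
  "unit_map B c = dg_smul B c (dg_one B)"

definition resolving_alg :: "('k::field_char_0, 'b) dga \<Rightarrow> bool" where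
  "resolving_alg B \<longleftrightarrow> dga B \<and> resolving kdga B (unit_map B)"

text \<open>An element (p, q) of degree n stands for \<Sum>_i p_i t^i + \<Sum>_i q_i t^i dt with
p_i \<in> A^n, q_i \<in> A^(n-1); sign rule (a \<otimes> \<omega>)(b \<otimes> \<eta>) = (-1)^(|\<omega>||b|) ab \<otimes> \<omega>\<eta>.\<close>

definition AOm1 :: "('k::field_char_0, 'a) dga \<Rightarrow> ('k, (nat \<Rightarrow> 'a) \<times> (nat \<Rightarrow> 'a)) dga" where
  "AOm1 A = \<lparr>
     dg_elems = (\<lambda>n. {(p, q). (\<forall>i. p i \<in> dg_elems A n) \<and> (\<forall>i. q i \<in> dg_elems A (n - 1)) \<and>
                           finite {i. p i \<noteq> dg_zero A} \<and> finite {i. q i \<noteq> dg_zero A}}),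
     dg_zero = (\<lambda>_. dg_zero A, \<lambda>_. dg_zero A),
     dg_one = (\<lambda>i. if i = 0 then dg_one A else dg_zero A, \<lambda>_. dg_zero A),
     dg_add = (\<lambda>(p, q) (p', q'). (\<lambda>i. dg_add A (p i) (p' i), \<lambda>i. dg_add A (q i) (q' i))),
     dg_smul = (\<lambda>c (p, q). (\<lambda>i. dg_smul A c (p i), \<lambda>i. dg_smul A c (q i))),
     dg_mul = (\<lambda>(p, q) (p', q').
        (\<lambda>k. lsum A (map (\<lambda>i. dg_mul A (p i) (p' (k - i))) [0..<Suc k]),
         \<lambda>k. lsum A (map (\<lambda>i. dg_add A (dg_mul A (p i) (q' (k - i)))
                                       (dg_smul A (esgn A (p' (k - i))) (dg_mul A (q i) (p' (k - i)))))
                        [0..<Suc k]))),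
     dg_d = (\<lambda>(p, q). (\<lambda>i. dg_d A (p i),
               \<lambda>i. dg_add A (dg_smul A (esgn A (p (Suc i)) * of_nat (Suc i)) (p (Suc i))) (dg_d A (q i))))
   \<rparr>"

definition incl_Om :: "('k, 'a) dga \<Rightarrow> 'a \<Rightarrow> (nat \<Rightarrow> 'a) \<times> (nat \<Rightarrow> 'a)" where
  "incl_Om A a = (\<lambda>i. if i = 0 then a else dg_zero A, \<lambda>_. dg_zero A)"

definition ev0 :: "(nat \<Rightarrow> 'a) \<times> (nat \<Rightarrow> 'a) \<Rightarrow> 'a" where
  "ev0 pq = fst pq 0"

definition ev1 :: "('k, 'a) dga \<Rightarrow> (nat \<Rightarrow> 'a) \<times> (nat \<Rightarrow> 'a) \<Rightarrow> 'a" where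
  "ev1 A pq = vsum A (fst pq) {i. fst pq i \<noteq> dg_zero A}"

text \<open>Vertices of Hom_C(B,A): dg morphisms B \<rightarrow> A (= A \<otimes> \<Omega>_0) restricting to \<psi> on C.\<close>
definition hom_vtx :: "('k::field_char_0, 'c) dga \<Rightarrow> ('k, 'b) dga \<Rightarrow> ('k, 'a) dga \<Rightarrow>
    ('c \<Rightarrow> 'b) \<Rightarrow> ('c \<Rightarrow> 'a) \<Rightarrow> ('b \<Rightarrow> 'a) \<Rightarrow> bool" where
  "hom_vtx C B A \<phi> \<psi> h \<longleftrightarrow> dgmor B A h \<and> (\<forall>c\<in>dg_carrier C. h (\<phi> c) = \<psi> c)"

text \<open>1-simplices of Hom_C(B,A): dg morphisms B \<rightarrow> A \<otimes> \<Omega>_1 restricting on C to the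
degenerate 1-simplex on \<psi>; their two vertices.\<close>
definition hom_edge :: "('k::field_char_0, 'c) dga \<Rightarrow> ('k, 'b) dga \<Rightarrow> ('k, 'a) dga \<Rightarrow>
    ('c \<Rightarrow> 'b) \<Rightarrow> ('c \<Rightarrow> 'a) \<Rightarrow> ('b \<Rightarrow> 'a) \<Rightarrow> ('b \<Rightarrow> 'a) \<Rightarrow> bool" where
  "hom_edge C B A \<phi> \<psi> h0 h1 \<longleftrightarrow>
     (\<exists>g. dgmor B (AOm1 A) g \<and> (\<forall>c\<in>dg_carrier C. g (\<phi> c) = incl_Om A (\<psi> c)) \<and>
          (\<forall>b\<in>dg_carrier B. ev0 (g b) = h0 b \<and> ev1 A (g b) = h1 b))"

text \<open>Two vertices have the same class in \<pi>_0 iff they are related by the equivalence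
relation generated by 1-simplices.\<close>
definition homot :: "('k::field_char_0, 'c) dga \<Rightarrow> ('k, 'b) dga \<Rightarrow> ('k, 'a) dga \<Rightarrow>
    ('c \<Rightarrow> 'b) \<Rightarrow> ('c \<Rightarrow> 'a) \<Rightarrow> ('b \<Rightarrow> 'a) \<Rightarrow> ('b \<Rightarrow> 'a) \<Rightarrow> bool" where
  "homot C B A \<phi> \<psi> h h' \<longleftrightarrow>
     hom_vtx C B A \<phi> \<psi> h \<and> hom_vtx C B A \<phi> \<psi> h' \<and>
     (\<lambda>u v. hom_vtx C B A \<phi> \<psi> u \<and> hom_vtx C B A \<phi> \<psi> v \<and>
            (hom_edge C B A \<phi> \<psi> u v \<or> hom_edge C B A \<phi> \<psi> v u))\<^sup>*\<^sup>* h h'"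

definition cocycle :: "('k::field, 'a) dga \<Rightarrow> int \<Rightarrow> 'a \<Rightarrow> bool" where
  "cocycle A n a \<longleftrightarrow> a \<in> dg_elems A n \<and> dg_d A a = dg_zero A"

definition cohomologous :: "('k::field, 'a) dga \<Rightarrow> int \<Rightarrow> 'a \<Rightarrow> 'a \<Rightarrow> bool" where
  "cohomologous A n a b \<longleftrightarrow> cocycle A n a \<and> cocycle A n b \<and>
     (\<exists>e\<in>dg_elems A (n - 1). dg_add A a (dg_smul A (-1) b) = dg_d A e)"

end

theory Submission
  imports Defs
begin

text \<open>
  B = B'[x] is free over B' on one generator x of degree r \<le> 0. As B' is concentrated in
  degrees \<le> 0, the coefficient of x^k (k \<ge> 1) in the expansion of d x would have the positive
  degree 1 + (1 - k) r, so d x = j y for some y \<in> B' of degree r + 1, and y is a cocycle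
  because j is injective. Hence h(y) is a cocycle for every vertex h of Hom_C(B', A).

  Along a 1-simplex g : B' \<rightarrow> A \<otimes> \<Omega>_1 the value g(y) is a cocycle, and the
  dt-part of d g(y) = 0 says that each coefficient of t^i, i > 0, is exact (i is invertible in
  characteristic 0). Evaluating at t = 1 and t = 0 therefore gives cohomologous cocycles, so the
  class [h(y)] depends only on the component of h.

  If h' is homotopic to the restriction of some h : B \<rightarrow> A, then h'(y) ~ h(j y) = d h(x) is
  exact. Conversely, if h'(y) = d e with e of degree r, then x \<mapsto> e extends h' to a dg
  morphism B \<rightarrow> A, defined coefficientwise on the unique expansion of an element of B in
  powers of x; its restriction to B' is h' itself, joined to h' by a constant 1-simplex.
\<close>

section \<open>Homogeneous algebra in a dg algebra\<close>

lemma sgn_int_0[simp]: "sgn_int 0 = 1"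
  by (simp add: sgn_int_def)

lemma sgn_int_mult_self[simp]: "(sgn_int n :: 'k::field) * sgn_int n = 1"
  by (simp add: sgn_int_def)

lemma sgn_int_nonzero[simp]: "(sgn_int n :: 'k::field) \<noteq> 0"
  by (simp add: sgn_int_def)

lemma vsum_cong: assumes "finite S" "\<And>i. i \<in> S \<Longrightarrow> f i = g i" shows "vsum D f S = vsum D g S"
proof -
  define l0 where "l0 = (SOME l. distinct l \<and> set l = S)"
  have "\<exists>l. distinct l \<and> set l = S" using finite_distinct_list[OF assms(1)] by blast
  then have l0: "distinct l0 \<and> set l0 = S" unfolding l0_def by (rule someI_ex)
  then have e: "map f l0 = map g l0" using assms(2) by auto
  show ?thesis by (simp only: vsum_def l0_def[symmetric] e)
qed

lemma dgaD: fixes D :: "('k::field_char_0, 'a) dga" assumes "dga D"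
  shows "(\<forall>n. dg_zero D \<in> dg_elems D n)"
  and "(\<forall>m n. m \<noteq> n \<longrightarrow> dg_elems D m \<inter> dg_elems D n \<subseteq> {dg_zero D})"
  and "(\<forall>n. \<forall>a\<in>dg_elems D n. \<forall>b\<in>dg_elems D n. dg_add D a b \<in> dg_elems D n)"
  and "(\<forall>n c. \<forall>a\<in>dg_elems D n. dg_smul D c a \<in> dg_elems D n)"
  and "(\<forall>n. \<forall>a\<in>dg_elems D n. \<forall>b\<in>dg_elems D n. \<forall>e\<in>dg_elems D n. dg_add D (dg_add D a b) e = dg_add D a (dg_add D b e))"
  and "(\<forall>n. \<forall>a\<in>dg_elems D n. \<forall>b\<in>dg_elems D n. dg_add D a b = dg_add D b a)"
  and "(\<forall>n. \<forall>a\<in>dg_elems D n. dg_add D a (dg_zero D) = a)"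
  and "(\<forall>n. \<forall>a\<in>dg_elems D n. dg_add D a (dg_smul D (-1) a) = dg_zero D)"
  and "(\<forall>n c. \<forall>a\<in>dg_elems D n. \<forall>b\<in>dg_elems D n. dg_smul D c (dg_add D a b) = dg_add D (dg_smul D c a) (dg_smul D c b))"
  and "(\<forall>n c c'. \<forall>a\<in>dg_elems D n. dg_smul D (c + c') a = dg_add D (dg_smul D c a) (dg_smul D c' a))"
  and "(\<forall>n c c'. \<forall>a\<in>dg_elems D n. dg_smul D (c * c') a = dg_smul D c (dg_smul D c' a))"
  and "(\<forall>n. \<forall>a\<in>dg_elems D n. dg_smul D 1 a = a)"
  and "(\<forall>m n. \<forall>a\<in>dg_elems D m. \<forall>b\<in>dg_elems D n. dg_mul D a b \<in> dg_elems D (m + n))"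
  and "(\<forall>m n. \<forall>a\<in>dg_elems D m. \<forall>b\<in>dg_elems D m. \<forall>e\<in>dg_elems D n. dg_mul D (dg_add D a b) e = dg_add D (dg_mul D a e) (dg_mul D b e))"
  and "(\<forall>m n c. \<forall>a\<in>dg_elems D m. \<forall>e\<in>dg_elems D n. dg_mul D (dg_smul D c a) e = dg_smul D c (dg_mul D a e))"
  and "(\<forall>l m n. \<forall>a\<in>dg_elems D l. \<forall>b\<in>dg_elems D m. \<forall>e\<in>dg_elems D n. dg_mul D (dg_mul D a b) e = dg_mul D a (dg_mul D b e))"
  and "dg_one D \<in> dg_elems D 0"
  and "(\<forall>n. \<forall>a\<in>dg_elems D n. dg_mul D (dg_one D) a = a)"
  and "(\<forall>m n. \<forall>a\<in>dg_elems D m. \<forall>b\<in>dg_elems D n. dg_mul D a b = dg_smul D (sgn_int (m * n)) (dg_mul D b a))"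
  and "(\<forall>n. \<forall>a\<in>dg_elems D n. dg_d D a \<in> dg_elems D (n + 1))"
  and "(\<forall>n. \<forall>a\<in>dg_elems D n. \<forall>b\<in>dg_elems D n. dg_d D (dg_add D a b) = dg_add D (dg_d D a) (dg_d D b))"
  and "(\<forall>n c. \<forall>a\<in>dg_elems D n. dg_d D (dg_smul D c a) = dg_smul D c (dg_d D a))"
  and "(\<forall>n. \<forall>a\<in>dg_elems D n. dg_d D (dg_d D a) = dg_zero D)"
  and "(\<forall>m n. \<forall>a\<in>dg_elems D m. \<forall>b\<in>dg_elems D n. dg_d D (dg_mul D a b) = dg_add D (dg_mul D (dg_d D a) b) (dg_smul D (sgn_int m) (dg_mul D a (dg_d D b))))"
  by (insert assms[unfolded dga_def]) (elim conjE, assumption)+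

locale dg_algebra =
  fixes D :: "('k::field_char_0, 'a) dga"
  assumes dga: "dga D"
begin

lemma zero_closed[simp]: "dg_zero D \<in> dg_elems D n"
  using dgaD(1)[OF dga] by blast
lemma elems_disjoint: "m \<noteq> n \<Longrightarrow> a \<in> dg_elems D m \<Longrightarrow> a \<in> dg_elems D n \<Longrightarrow> a = dg_zero D"
proof -
  assume h: "m \<noteq> n" "a \<in> dg_elems D m" "a \<in> dg_elems D n"
  have "dg_elems D m \<inter> dg_elems D n \<subseteq> {dg_zero D}" using dgaD(2)[OF dga] h(1) by blast
  then show ?thesis using h by blast
qed
lemma add_closed[intro]: "a \<in> dg_elems D n \<Longrightarrow> b \<in> dg_elems D n \<Longrightarrow> dg_add D a b \<in> dg_elems D n"
  using dgaD(3)[OF dga] by blast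
lemma smul_closed[intro]: "a \<in> dg_elems D n \<Longrightarrow> dg_smul D c a \<in> dg_elems D n"
  using dgaD(4)[OF dga] by blast
lemma add_assoc: "a \<in> dg_elems D n \<Longrightarrow> b \<in> dg_elems D n \<Longrightarrow> e \<in> dg_elems D n \<Longrightarrow>
   dg_add D (dg_add D a b) e = dg_add D a (dg_add D b e)"
  using dgaD(5)[OF dga] by blast
lemma add_commute: "a \<in> dg_elems D n \<Longrightarrow> b \<in> dg_elems D n \<Longrightarrow> dg_add D a b = dg_add D b a"
  using dgaD(6)[OF dga] by blast
lemma add_zero[simp]: "a \<in> dg_elems D n \<Longrightarrow> dg_add D a (dg_zero D) = a"
  using dgaD(7)[OF dga] by blast
lemma add_neg: "a \<in> dg_elems D n \<Longrightarrow> dg_add D a (dg_smul D (-1) a) = dg_zero D"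
  using dgaD(8)[OF dga] by blast
lemma smul_add: "a \<in> dg_elems D n \<Longrightarrow> b \<in> dg_elems D n \<Longrightarrow>
   dg_smul D c (dg_add D a b) = dg_add D (dg_smul D c a) (dg_smul D c b)"
  using dgaD(9)[OF dga] by blast
lemma add_smul: "a \<in> dg_elems D n \<Longrightarrow>
   dg_smul D (c + c') a = dg_add D (dg_smul D c a) (dg_smul D c' a)"
  using dgaD(10)[OF dga] by blast
lemma smul_smul: "a \<in> dg_elems D n \<Longrightarrow> dg_smul D c (dg_smul D c' a) = dg_smul D (c * c') a"
  using dgaD(11)[OF dga] by metis
lemma smul_one[simp]: "a \<in> dg_elems D n \<Longrightarrow> dg_smul D 1 a = a"
  using dgaD(12)[OF dga] by blast
lemma mul_closed[intro]: "a \<in> dg_elems D m \<Longrightarrow> b \<in> dg_elems D n \<Longrightarrow> dg_mul D a b \<in> dg_elems D (m + n)"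
  using dgaD(13)[OF dga] by blast
lemma distrib_right: "a \<in> dg_elems D m \<Longrightarrow> b \<in> dg_elems D m \<Longrightarrow> e \<in> dg_elems D n \<Longrightarrow>
   dg_mul D (dg_add D a b) e = dg_add D (dg_mul D a e) (dg_mul D b e)"
  using dgaD(14)[OF dga] by blast
lemma mul_smul_left: "a \<in> dg_elems D m \<Longrightarrow> e \<in> dg_elems D n \<Longrightarrow>
   dg_mul D (dg_smul D c a) e = dg_smul D c (dg_mul D a e)"
  using dgaD(15)[OF dga] by blast
lemma mul_assoc: "a \<in> dg_elems D l \<Longrightarrow> b \<in> dg_elems D m \<Longrightarrow> e \<in> dg_elems D n \<Longrightarrow>
   dg_mul D (dg_mul D a b) e = dg_mul D a (dg_mul D b e)"
  using dgaD(16)[OF dga] by blast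
lemma one_closed[simp]: "dg_one D \<in> dg_elems D 0"
  using dgaD(17)[OF dga] by blast
lemma one_mul[simp]: "a \<in> dg_elems D n \<Longrightarrow> dg_mul D (dg_one D) a = a"
  using dgaD(18)[OF dga] by blast
lemma mul_commute: "a \<in> dg_elems D m \<Longrightarrow> b \<in> dg_elems D n \<Longrightarrow>
   dg_mul D a b = dg_smul D (sgn_int (m * n)) (dg_mul D b a)"
  using dgaD(19)[OF dga] by blast
lemma d_closed[intro]: "a \<in> dg_elems D n \<Longrightarrow> dg_d D a \<in> dg_elems D (n + 1)"
  using dgaD(20)[OF dga] by blast
lemma d_add: "a \<in> dg_elems D n \<Longrightarrow> b \<in> dg_elems D n \<Longrightarrow>
   dg_d D (dg_add D a b) = dg_add D (dg_d D a) (dg_d D b)"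
  using dgaD(21)[OF dga] by blast
lemma d_smul: "a \<in> dg_elems D n \<Longrightarrow> dg_d D (dg_smul D c a) = dg_smul D c (dg_d D a)"
  using dgaD(22)[OF dga] by blast
lemma d_d[simp]: "a \<in> dg_elems D n \<Longrightarrow> dg_d D (dg_d D a) = dg_zero D"
  using dgaD(23)[OF dga] by blast
lemma d_mul: "a \<in> dg_elems D m \<Longrightarrow> b \<in> dg_elems D n \<Longrightarrow>
   dg_d D (dg_mul D a b) =
     dg_add D (dg_mul D (dg_d D a) b) (dg_smul D (sgn_int m) (dg_mul D a (dg_d D b)))"
  using dgaD(24)[OF dga] by blast

lemma mul_closed'[intro]: "a \<in> dg_elems D m \<Longrightarrow> b \<in> dg_elems D n \<Longrightarrow> k = m + n \<Longrightarrow> dg_mul D a b \<in> dg_elems D k"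
  using mul_closed by blast

lemma d_closed'[intro]: "a \<in> dg_elems D n \<Longrightarrow> k = n + 1 \<Longrightarrow> dg_d D a \<in> dg_elems D k"
  using d_closed by blast

lemma zero_add[simp]: "a \<in> dg_elems D n \<Longrightarrow> dg_add D (dg_zero D) a = a"
  using add_commute[of "dg_zero D" n a] by simp

lemma neg_add: assumes "a \<in> dg_elems D n" shows "dg_add D (dg_smul D (-1) a) a = dg_zero D"
proof -
  have na: "dg_smul D (-1) a \<in> dg_elems D n" using assms by blast
  show ?thesis using add_commute[OF na assms] add_neg[OF assms] by simp
qed

lemma add_left_cancel: assumes "a \<in> dg_elems D n" "b \<in> dg_elems D n" "c \<in> dg_elems D n"
  and "dg_add D a b = dg_add D a c" shows "b = c"
proof -
  have na: "dg_smul D (-1) a \<in> dg_elems D n" using assms by blast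
  have "b = dg_add D (dg_add D (dg_smul D (-1) a) a) b"
    using neg_add[OF assms(1)] assms by simp
  also have "\<dots> = dg_add D (dg_smul D (-1) a) (dg_add D a b)"
    using add_assoc[OF na assms(1) assms(2)] .
  also have "\<dots> = dg_add D (dg_smul D (-1) a) (dg_add D a c)" using assms by simp
  also have "\<dots> = dg_add D (dg_add D (dg_smul D (-1) a) a) c"
    using add_assoc[OF na assms(1) assms(3)] by simp
  also have "\<dots> = c" using neg_add[OF assms(1)] assms by simp
  finally show ?thesis .
qed

lemma smul_zero_left[simp]: assumes "a \<in> dg_elems D n" shows "dg_smul D 0 a = dg_zero D"
proof -
  have s: "dg_smul D 0 a \<in> dg_elems D n" using assms by blast
  have "dg_add D (dg_smul D 0 a) (dg_smul D 0 a) = dg_add D (dg_smul D 0 a) (dg_zero D)"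
    using add_smul[OF assms, of 0 0] add_zero[OF s] by simp
  then show ?thesis using add_left_cancel[OF s s zero_closed] by blast
qed

lemma smul_zero_right[simp]: "dg_smul D c (dg_zero D) = dg_zero D"
proof -
  have "dg_smul D c (dg_zero D) = dg_smul D c (dg_smul D 0 (dg_zero D))"
    using smul_zero_left[of "dg_zero D" 0] by simp
  also have "\<dots> = dg_smul D (c * 0) (dg_zero D)" using smul_smul[of "dg_zero D" 0 c 0] by simp
  also have "\<dots> = dg_zero D" using smul_zero_left[of "dg_zero D" 0] by simp
  finally show ?thesis .
qed

lemma mul_zero_left[simp]: assumes "e \<in> dg_elems D n" shows "dg_mul D (dg_zero D) e = dg_zero D"
proof -
  have z: "dg_mul D (dg_zero D) e \<in> dg_elems D n" using mul_closed[OF zero_closed assms, of 0] by simp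
  have "dg_mul D (dg_zero D) e = dg_mul D (dg_smul D 0 (dg_zero D)) e"
    by simp
  also have "\<dots> = dg_smul D 0 (dg_mul D (dg_zero D) e)"
    using mul_smul_left[OF zero_closed assms] by simp
  also have "\<dots> = dg_zero D" using smul_zero_left[OF z] .
  finally show ?thesis .
qed

lemma mul_zero_right[simp]: assumes "a \<in> dg_elems D m" shows "dg_mul D a (dg_zero D) = dg_zero D"
  using mul_commute[OF assms zero_closed[of 0]] assms by simp

lemma mul_one[simp]: assumes "a \<in> dg_elems D m" shows "dg_mul D a (dg_one D) = a"
  using mul_commute[OF assms one_closed] assms by simp

lemma distrib_left:
  assumes e: "e \<in> dg_elems D m" and a: "a \<in> dg_elems D n" and b: "b \<in> dg_elems D n"
  shows "dg_mul D e (dg_add D a b) = dg_add D (dg_mul D e a) (dg_mul D e b)"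
proof -
  let ?s = "sgn_int (m * n) :: 'k"
  have ea: "dg_mul D e a \<in> dg_elems D (m + n)" and eb: "dg_mul D e b \<in> dg_elems D (m + n)"
    using e a b by blast+
  have swap: "dg_mul D u e = dg_smul D ?s (dg_mul D e u)" if "u \<in> dg_elems D n" for u
    using mul_commute[OF that e] by (simp add: mult.commute)
  have "dg_mul D e (dg_add D a b) = dg_smul D ?s (dg_mul D (dg_add D a b) e)"
    using mul_commute[OF e add_closed[OF a b]] .
  also have "\<dots> = dg_smul D ?s (dg_add D (dg_smul D ?s (dg_mul D e a)) (dg_smul D ?s (dg_mul D e b)))"
    using distrib_right[OF a b e] swap[OF a] swap[OF b] by simp
  also have "\<dots> = dg_add D (dg_mul D e a) (dg_mul D e b)"
    using smul_add[OF smul_closed[OF ea] smul_closed[OF eb]] smul_smul[OF ea] smul_smul[OF eb] ea eb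
    by simp
  finally show ?thesis .
qed

lemma mul_smul_right:
  assumes a: "a \<in> dg_elems D m" and b: "b \<in> dg_elems D n"
  shows "dg_mul D a (dg_smul D c b) = dg_smul D c (dg_mul D a b)"
proof -
  let ?s = "sgn_int (m * n) :: 'k"
  have ab: "dg_mul D a b \<in> dg_elems D (m + n)" using a b by blast
  have "dg_mul D a (dg_smul D c b) = dg_smul D ?s (dg_smul D c (dg_mul D b a))"
    using mul_commute[OF a smul_closed[OF b]] mul_smul_left[OF b a] by simp
  also have "\<dots> = dg_smul D ?s (dg_smul D c (dg_smul D ?s (dg_mul D a b)))"
    using mul_commute[OF b a] by (simp add: mult.commute)
  also have "\<dots> = dg_smul D c (dg_mul D a b)"
    using smul_smul ab smul_closed[OF ab] by (simp add: mult.commute mult.left_commute)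
  finally show ?thesis .
qed

lemma d_zero[simp]: "dg_d D (dg_zero D) = dg_zero D"
proof -
  have "dg_d D (dg_zero D) = dg_d D (dg_smul D 0 (dg_zero D))"
    by simp
  also have "\<dots> = dg_smul D 0 (dg_d D (dg_zero D))" by (rule d_smul[of _ 0]) simp
  also have "\<dots> = dg_zero D" by (rule smul_zero_left[of _ 1]) auto
  finally show ?thesis .
qed

lemma d_one[simp]: "dg_d D (dg_one D) = dg_zero D"
proof -
  have d1: "dg_d D (dg_one D) \<in> dg_elems D 1" using d_closed[of "dg_one D" 0] by simp
  have "dg_d D (dg_one D) = dg_d D (dg_mul D (dg_one D) (dg_one D))" using one_mul[OF one_closed] by simp
  also have "\<dots> = dg_add D (dg_d D (dg_one D)) (dg_d D (dg_one D))"
    using d_mul[of "dg_one D" 0 "dg_one D" 0] d1 by simp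
  finally have "dg_add D (dg_d D (dg_one D)) (dg_zero D) = dg_add D (dg_d D (dg_one D)) (dg_d D (dg_one D))"
    using d1 by simp
  then show ?thesis using add_left_cancel[OF d1 zero_closed d1] by simp
qed

lemma add_eq_zero_imp_eq_neg: assumes "a \<in> dg_elems D n" "b \<in> dg_elems D n" "dg_add D a b = dg_zero D"
  shows "a = dg_smul D (-1) b"
proof -
  have "dg_add D b a = dg_add D b (dg_smul D (-1) b)"
    using assms add_commute[of a n b] add_neg[of b n] by simp
  then show ?thesis using add_left_cancel[of b n a "dg_smul D (-1) b"] assms by blast
qed

lemma add_add_swap: assumes "a \<in> dg_elems D n" "b \<in> dg_elems D n" "c \<in> dg_elems D n" "e \<in> dg_elems D n"
  shows "dg_add D (dg_add D a b) (dg_add D c e) = dg_add D (dg_add D a c) (dg_add D b e)"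
proof -
  have "dg_add D (dg_add D a b) (dg_add D c e) = dg_add D a (dg_add D b (dg_add D c e))"
    using assms by (simp add: add_assoc add_closed)
  also have "\<dots> = dg_add D a (dg_add D (dg_add D b c) e)"
    using assms add_assoc[of b n c e] by simp
  also have "\<dots> = dg_add D a (dg_add D (dg_add D c b) e)"
    using assms add_commute[of b n c] by simp
  also have "\<dots> = dg_add D a (dg_add D c (dg_add D b e))"
    using assms add_assoc[of c n b e] by simp
  also have "\<dots> = dg_add D (dg_add D a c) (dg_add D b e)"
    using assms add_assoc[of a n c "dg_add D b e"] by (simp add: add_closed)
  finally show ?thesis .
qed

lemma odd_square_eq_zero: assumes "z \<in> dg_elems D r" "odd r" shows "dg_mul D z z = dg_zero D"
proof -
  define w where "w = dg_mul D z z"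
  have w: "w \<in> dg_elems D (r + r)" using assms w_def by blast
  have "w = dg_smul D (-1) w" using mul_commute[OF assms(1) assms(1)] assms(2) w_def
    by (simp add: sgn_int_def)
  then have "dg_add D w w = dg_zero D" using add_neg w by metis
  then have "dg_smul D 2 w = dg_zero D" using add_smul[OF w, of 1 1] w by simp
  then have "dg_smul D (1/2) (dg_smul D 2 w) = dg_zero D" by simp
  then show ?thesis using smul_smul[OF w] w w_def by simp
qed

lemma add_left_commute: assumes "a \<in> dg_elems D n" "b \<in> dg_elems D n" "c \<in> dg_elems D n"
  shows "dg_add D b (dg_add D a c) = dg_add D a (dg_add D b c)"
proof -
  have "dg_add D b (dg_add D a c) = dg_add D (dg_add D b a) c" using add_assoc[OF assms(2,1,3)] by simp
  also have "\<dots> = dg_add D (dg_add D a b) c" using add_commute[OF assms(1,2)] by simp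
  also have "\<dots> = dg_add D a (dg_add D b c)" using add_assoc[OF assms(1,2,3)] .
  finally show ?thesis .
qed

lemma lsum_closed[intro]: "set l \<subseteq> dg_elems D n \<Longrightarrow> lsum D l \<in> dg_elems D n"
  by (induction l) auto

lemma lsum_remove1: "a \<in> set l \<Longrightarrow> set l \<subseteq> dg_elems D n \<Longrightarrow>
    lsum D l = dg_add D a (lsum D (remove1 a l))"
proof (induction l)
  case Nil then show ?case by simp
next
  case (Cons b l)
  show ?case
  proof (cases "a = b")
    case True then show ?thesis by simp
  next
    case False
    then have al: "a \<in> set l" using Cons by simp
    have sl: "set (remove1 a l) \<subseteq> dg_elems D n" using Cons.prems(2) set_remove1_subset[of a l] by auto
    have sl': "set l \<subseteq> dg_elems D n" using Cons.prems(2) by simp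
    have "lsum D (b # l) = dg_add D b (dg_add D a (lsum D (remove1 a l)))"
      using Cons.IH[OF al sl'] by simp
    also have "\<dots> = dg_add D a (dg_add D b (lsum D (remove1 a l)))"
      using Cons.prems(2) al by (intro add_left_commute[of a n b] lsum_closed[OF sl]) auto
    finally show ?thesis using False by simp
  qed
qed

lemma lsum_perm: "mset l1 = mset l2 \<Longrightarrow> set l1 \<subseteq> dg_elems D n \<Longrightarrow> lsum D l1 = lsum D l2"
proof (induction l1 arbitrary: l2)
  case Nil then show ?case by simp
next
  case (Cons a l)
  have st: "set (a # l) = set l2" using mset_eq_setD[OF Cons.prems(1)] .
  have a2: "a \<in> set l2" using st by auto
  have s2: "set l2 \<subseteq> dg_elems D n" using Cons.prems(2) st[symmetric] by blast
  have m: "mset l = mset (remove1 a l2)" using Cons.prems(1)[symmetric] by simp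
  have "lsum D l2 = dg_add D a (lsum D (remove1 a l2))" using lsum_remove1[OF a2 s2] .
  moreover have "set l \<subseteq> dg_elems D n" using Cons.prems(2) by simp
  ultimately show ?case using Cons.IH[OF m] by simp
qed

lemma vsum_eq_lsum: assumes "finite S" "distinct l" "set l = S" "f ` S \<subseteq> dg_elems D n"
  shows "vsum D f S = lsum D (map f l)"
proof -
  define l0 where "l0 = (SOME l. distinct l \<and> set l = S)"
  have "\<exists>l. distinct l \<and> set l = S" using finite_distinct_list[OF assms(1)] by blast
  then have l0: "distinct l0 \<and> set l0 = S" unfolding l0_def by (rule someI_ex)
  have "mset l0 = mset l" using l0 assms set_eq_iff_mset_eq_distinct[of l0 l] by simp
  then have "mset (map f l0) = mset (map f l)" by simp
  moreover have "set (map f l0) \<subseteq> dg_elems D n" using l0 assms(4) by auto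
  ultimately have "lsum D (map f l0) = lsum D (map f l)" by (rule lsum_perm)
  then show ?thesis unfolding vsum_def l0_def by simp
qed

lemma vsum_empty[simp]: fixes f :: "'i \<Rightarrow> 'a" shows "vsum D f {} = dg_zero D"
proof -
  have "(SOME l. distinct l \<and> set l = ({}::'i set)) = []" by (rule some_equality) auto
  then show ?thesis unfolding vsum_def by (simp only: lsum.simps list.map(1))
qed

lemma vsum_insert:
  assumes "finite S" "i \<notin> S" "\<And>j. j \<in> insert i S \<Longrightarrow> f j \<in> dg_elems D n"
  shows "vsum D f (insert i S) = dg_add D (f i) (vsum D f S)"
proof -
  obtain l where l: "distinct l" "set l = S" using finite_distinct_list[OF assms(1)] by blast
  have "vsum D f (insert i S) = lsum D (map f (i # l))"
    using assms l by (intro vsum_eq_lsum) auto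
  moreover have "vsum D f S = lsum D (map f l)" using assms l by (intro vsum_eq_lsum) auto
  ultimately show ?thesis by simp
qed

lemma vsum_closed[intro]: assumes "finite S" "f ` S \<subseteq> dg_elems D n" shows "vsum D f S \<in> dg_elems D n"
proof -
  obtain l where l: "distinct l" "set l = S" using finite_distinct_list[OF assms(1)] by blast
  have "set (map f l) \<subseteq> dg_elems D n" using l assms(2) by auto
  then show ?thesis using vsum_eq_lsum[OF assms(1) l assms(2)] lsum_closed by simp
qed

lemma vsum_closed'[intro]: "finite S \<Longrightarrow> (\<And>i. i \<in> S \<Longrightarrow> f i \<in> dg_elems D n) \<Longrightarrow> vsum D f S \<in> dg_elems D n"
  by (rule vsum_closed) auto

lemma vsum_singleton[simp]: "f i \<in> dg_elems D n \<Longrightarrow> vsum D f {i} = f i"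
  using vsum_insert[of "{}" i f n] by simp


lemma vsum_neutral: "finite S \<Longrightarrow> (\<And>i. i \<in> S \<Longrightarrow> f i = dg_zero D) \<Longrightarrow> vsum D f S = dg_zero D"
proof (induction S rule: finite_induct)
  case empty then show ?case by simp
next
  case (insert i S)
  then show ?case using vsum_insert[of S i f 0] by simp
qed

lemma vsum_mono_neutral_aux: "finite F \<Longrightarrow> finite S \<Longrightarrow> F \<inter> S = {} \<Longrightarrow> (\<And>i. i \<in> F \<Longrightarrow> f i = dg_zero D) \<Longrightarrow>
   (\<And>i. i \<in> S \<Longrightarrow> f i \<in> dg_elems D n) \<Longrightarrow> vsum D f (F \<union> S) = vsum D f S"
proof (induction F rule: finite_induct)
  case empty then show ?case by simp
next
  case (insert i F)
  have "vsum D f (insert i F \<union> S) = vsum D f (insert i (F \<union> S))" by simp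
  also have "\<dots> = dg_add D (f i) (vsum D f (F \<union> S))"
    using insert by (intro vsum_insert[of _ _ _ n]) auto
  also have "\<dots> = vsum D f S" using insert vsum_closed'[of S f n] by simp
  finally show ?case .
qed

lemma vsum_mono_neutral: assumes "finite T" "S \<subseteq> T" "\<And>i. i \<in> T - S \<Longrightarrow> f i = dg_zero D"
  "\<And>i. i \<in> T \<Longrightarrow> f i \<in> dg_elems D n" shows "vsum D f T = vsum D f S"
proof -
  have "T = (T - S) \<union> S" using assms by auto
  then have "vsum D f T = vsum D f ((T - S) \<union> S)" by simp
  also have "\<dots> = vsum D f S"
    using assms finite_subset[OF assms(2) assms(1)] by (intro vsum_mono_neutral_aux[of _ _ _ n]) auto
  finally show ?thesis .
qed

lemma vsum_add: "finite S \<Longrightarrow> (\<And>i. i \<in> S \<Longrightarrow> f i \<in> dg_elems D n) \<Longrightarrow> (\<And>i. i \<in> S \<Longrightarrow> g i \<in> dg_elems D n) \<Longrightarrow>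
  vsum D (\<lambda>i. dg_add D (f i) (g i)) S = dg_add D (vsum D f S) (vsum D g S)"
proof (induction S rule: finite_induct)
  case empty then show ?case by simp
next
  case (insert i S)
  have "vsum D (\<lambda>i. dg_add D (f i) (g i)) (insert i S) =
     dg_add D (dg_add D (f i) (g i)) (vsum D (\<lambda>i. dg_add D (f i) (g i)) S)"
    using insert by (intro vsum_insert[of _ _ _ n]) auto
  also have "\<dots> = dg_add D (dg_add D (f i) (g i)) (dg_add D (vsum D f S) (vsum D g S))"
    using insert by simp
  also have "\<dots> = dg_add D (dg_add D (f i) (vsum D f S)) (dg_add D (g i) (vsum D g S))"
    using insert by (intro add_add_swap) (auto intro!: vsum_closed')
  also have "\<dots> = dg_add D (vsum D f (insert i S)) (vsum D g (insert i S))"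
    using insert vsum_insert[of S i f n] vsum_insert[of S i g n] by simp
  finally show ?case .
qed

lemma vsum_smul: "finite S \<Longrightarrow> (\<And>i. i \<in> S \<Longrightarrow> f i \<in> dg_elems D n) \<Longrightarrow>
  vsum D (\<lambda>i. dg_smul D c (f i)) S = dg_smul D c (vsum D f S)"
proof (induction S rule: finite_induct)
  case empty then show ?case by simp
next
  case (insert i S)
  have "vsum D (\<lambda>i. dg_smul D c (f i)) (insert i S) =
     dg_add D (dg_smul D c (f i)) (vsum D (\<lambda>i. dg_smul D c (f i)) S)"
    using insert by (intro vsum_insert[of _ _ _ n]) auto
  also have "\<dots> = dg_smul D c (dg_add D (f i) (vsum D f S))"
    using insert by (simp add: smul_add[of _ n] vsum_closed')
  also have "\<dots> = dg_smul D c (vsum D f (insert i S))"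
    using insert vsum_insert[of S i f n] by simp
  finally show ?case .
qed

lemma vsum_distrib_right: "finite S \<Longrightarrow> (\<And>i. i \<in> S \<Longrightarrow> f i \<in> dg_elems D m) \<Longrightarrow> e \<in> dg_elems D n \<Longrightarrow>
  vsum D (\<lambda>i. dg_mul D (f i) e) S = dg_mul D (vsum D f S) e"
proof (induction S rule: finite_induct)
  case empty then show ?case by simp
next
  case (insert i S)
  have "vsum D (\<lambda>i. dg_mul D (f i) e) (insert i S) =
     dg_add D (dg_mul D (f i) e) (vsum D (\<lambda>i. dg_mul D (f i) e) S)"
    using insert by (intro vsum_insert[of _ _ _ "m + n"]) auto
  also have "\<dots> = dg_mul D (dg_add D (f i) (vsum D f S)) e"
    using insert by (simp add: distrib_right[of _ m _ _ n] vsum_closed')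
  also have "\<dots> = dg_mul D (vsum D f (insert i S)) e"
    using insert vsum_insert[of S i f m] by simp
  finally show ?case .
qed

lemma vsum_distrib_left: "finite S \<Longrightarrow> (\<And>i. i \<in> S \<Longrightarrow> f i \<in> dg_elems D n) \<Longrightarrow> e \<in> dg_elems D m \<Longrightarrow>
  vsum D (\<lambda>i. dg_mul D e (f i)) S = dg_mul D e (vsum D f S)"
proof (induction S rule: finite_induct)
  case empty then show ?case by simp
next
  case (insert i S)
  have "vsum D (\<lambda>i. dg_mul D e (f i)) (insert i S) =
     dg_add D (dg_mul D e (f i)) (vsum D (\<lambda>i. dg_mul D e (f i)) S)"
    using insert by (intro vsum_insert[of _ _ _ "m + n"]) auto
  also have "\<dots> = dg_mul D e (dg_add D (f i) (vsum D f S))"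
    using insert by (simp add: distrib_left[of _ m _ n] vsum_closed')
  also have "\<dots> = dg_mul D e (vsum D f (insert i S))"
    using insert vsum_insert[of S i f n] by simp
  finally show ?case .
qed

lemma vsum_d: "finite S \<Longrightarrow> (\<And>i. i \<in> S \<Longrightarrow> f i \<in> dg_elems D n) \<Longrightarrow>
  vsum D (\<lambda>i. dg_d D (f i)) S = dg_d D (vsum D f S)"
proof (induction S rule: finite_induct)
  case empty then show ?case by simp
next
  case (insert i S)
  have "vsum D (\<lambda>i. dg_d D (f i)) (insert i S) =
     dg_add D (dg_d D (f i)) (vsum D (\<lambda>i. dg_d D (f i)) S)"
    using insert by (intro vsum_insert[of _ _ _ "n + 1"]) auto
  also have "\<dots> = dg_d D (dg_add D (f i) (vsum D f S))"
    using insert by (simp add: d_add[of _ n] vsum_closed')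
  also have "\<dots> = dg_d D (vsum D f (insert i S))"
    using insert vsum_insert[of S i f n] by simp
  finally show ?case .
qed

lemma lsum_zeros: "\<forall>z\<in>set l. z = dg_zero D \<Longrightarrow> lsum D l = dg_zero D"
proof (induction l)
  case Nil then show ?case by simp
next
  case (Cons a l)
  then have "a = dg_zero D" "lsum D l = dg_zero D" by auto
  then show ?case using add_zero[OF zero_closed[of 0]] by simp
qed

lemma add_sub_cancel: assumes "a \<in> dg_elems D n" "w \<in> dg_elems D n"
  shows "dg_add D (dg_add D a w) (dg_smul D (-1) a) = w"
proof -
  have na: "dg_smul D (-1) a \<in> dg_elems D n" using assms by blast
  have "dg_add D (dg_add D a w) (dg_smul D (-1) a) = dg_add D (dg_add D w a) (dg_smul D (-1) a)"
    using add_commute[OF assms] by simp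
  also have "\<dots> = dg_add D w (dg_add D a (dg_smul D (-1) a))" using add_assoc[OF assms(2) assms(1) na] .
  also have "\<dots> = w" using add_neg[OF assms(1)] assms(2) by simp
  finally show ?thesis .
qed

section \<open>Cocycles and the path algebra A \<otimes> \<Omega>_1\<close>

lemma cocycle_zero: "cocycle D n (dg_zero D)" unfolding cocycle_def by simp

lemma cohomologous_refl: "cocycle D n a \<Longrightarrow> cohomologous D n a a"
  unfolding cohomologous_def cocycle_def using add_neg by (intro conjI bexI[of _ "dg_zero D"]) auto

lemma cohomologous_sym: assumes "cohomologous D n a b" shows "cohomologous D n b a"
proof -
  obtain e where e: "e \<in> dg_elems D (n - 1)" "dg_add D a (dg_smul D (-1) b) = dg_d D e"
    and a: "a \<in> dg_elems D n" and b: "b \<in> dg_elems D n"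
    using assms unfolding cohomologous_def cocycle_def by blast
  have na: "dg_smul D (-1) a \<in> dg_elems D n" and nb: "dg_smul D (-1) b \<in> dg_elems D n" using a b by blast+
  have "dg_smul D (-1) (dg_add D a (dg_smul D (-1) b)) = dg_add D (dg_smul D (-1) a) b"
    using smul_add[OF a nb] smul_smul[OF b] b by simp
  also have "\<dots> = dg_add D b (dg_smul D (-1) a)" using add_commute[OF na b] .
  finally have "dg_add D b (dg_smul D (-1) a) = dg_d D (dg_smul D (-1) e)"
    using e d_smul[OF e(1)] by simp
  moreover have "dg_smul D (-1) e \<in> dg_elems D (n - 1)" using e by blast
  ultimately show ?thesis using assms unfolding cohomologous_def by blast
qed

lemma cohomologous_trans: assumes "cohomologous D n a b" "cohomologous D n b c" shows "cohomologous D n a c"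
proof -
  obtain e1 where e1: "e1 \<in> dg_elems D (n - 1)" "dg_add D a (dg_smul D (-1) b) = dg_d D e1"
    and a: "a \<in> dg_elems D n" and b: "b \<in> dg_elems D n"
    using assms(1) unfolding cohomologous_def cocycle_def by blast
  obtain e2 where e2: "e2 \<in> dg_elems D (n - 1)" "dg_add D b (dg_smul D (-1) c) = dg_d D e2"
    and c: "c \<in> dg_elems D n"
    using assms(2) unfolding cohomologous_def cocycle_def by blast
  have na: "dg_smul D (-1) a \<in> dg_elems D n" and nb: "dg_smul D (-1) b \<in> dg_elems D n"
    and nc: "dg_smul D (-1) c \<in> dg_elems D n" using a b c by blast+
  have "dg_add D (dg_add D a (dg_smul D (-1) b)) (dg_add D b (dg_smul D (-1) c)) =
        dg_add D a (dg_add D (dg_smul D (-1) b) (dg_add D b (dg_smul D (-1) c)))"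
    using add_assoc[OF a nb] b nc by blast
  also have "dg_add D (dg_smul D (-1) b) (dg_add D b (dg_smul D (-1) c)) = dg_add D (dg_add D (dg_smul D (-1) b) b) (dg_smul D (-1) c)"
    using add_assoc[OF nb b nc] by simp
  also have "\<dots> = dg_smul D (-1) c" using neg_add[OF b] nc by simp
  finally have "dg_add D a (dg_smul D (-1) c) = dg_add D (dg_d D e1) (dg_d D e2)" using e1 e2 by simp
  also have "\<dots> = dg_d D (dg_add D e1 e2)" using d_add[OF e1(1) e2(1)] by simp
  finally show ?thesis using assms e1 e2 unfolding cohomologous_def by blast
qed

lemma AOm1_elems: "dg_elems (AOm1 D) n = {(p, q). (\<forall>i. p i \<in> dg_elems D n) \<and> (\<forall>i. q i \<in> dg_elems D (n - 1)) \<and>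
                           finite {i. p i \<noteq> dg_zero D} \<and> finite {i. q i \<noteq> dg_zero D}}"
  unfolding AOm1_def by simp

lemma incl_Om_mul:
  assumes a: "a \<in> dg_elems D m" and b: "b \<in> dg_elems D n"
  shows "incl_Om D (dg_mul D a b) = dg_mul (AOm1 D) (incl_Om D a) (incl_Om D b)"
proof -
  let ?p = "\<lambda>i. if i = 0 then a else dg_zero D" and ?p' = "\<lambda>i. if i = 0 then b else dg_zero D"
  have p'c: "\<And>i. ?p' i \<in> dg_elems D n" using b by auto
  have pc: "\<And>i. ?p i \<in> dg_elems D m" using a by auto
  have ab: "dg_mul D a b \<in> dg_elems D (m + n)" using a b by blast
  have mul_fst: "lsum D (map (\<lambda>i. dg_mul D (?p i) (?p' (k - i))) [0..<Suc k]) = (if k = 0 then dg_mul D a b else dg_zero D)" for k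
  proof (cases "k = 0")
    case True then show ?thesis using ab by simp
  next
    case False
    show ?thesis using False
      by (simp, intro lsum_zeros ballI) (auto simp: mul_zero_left[OF p'c] mul_zero_right[OF a] mul_zero_left[OF b])
  qed
  have mul_snd: "lsum D (map (\<lambda>i. dg_add D (dg_mul D (?p i) (dg_zero D))
             (dg_smul D (esgn D (?p' (k - i))) (dg_mul D (dg_zero D) (?p' (k - i))))) [0..<Suc k]) = dg_zero D" for k
    by (intro lsum_zeros ballI) (auto simp: mul_zero_left[OF p'c] mul_zero_right[OF pc] mul_zero_left[OF b] add_zero[OF zero_closed[of 0]])
  show ?thesis
    unfolding incl_Om_def using mul_fst mul_snd by (simp add: AOm1_def fun_eq_iff)
qed

lemma incl_Om_dgmor: "dgmor D (AOm1 D) (incl_Om D)"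
  unfolding dgmor_def
proof (intro conjI allI ballI)
  fix n a assume a: "a \<in> dg_elems D n"
  have "finite {i. (if i = 0 then a else dg_zero D) \<noteq> dg_zero D}"
    by (rule finite_subset[of _ "{0}"]) auto
  then show "incl_Om D a \<in> dg_elems (AOm1 D) n"
    unfolding AOm1_elems incl_Om_def using a by auto
next
  fix n a b assume a: "a \<in> dg_elems D n" and b: "b \<in> dg_elems D n"
  show "incl_Om D (dg_add D a b) = dg_add (AOm1 D) (incl_Om D a) (incl_Om D b)"
    unfolding AOm1_def incl_Om_def by (auto simp: fun_eq_iff)
next
  fix n c a assume a: "a \<in> dg_elems D n"
  show "incl_Om D (dg_smul D c a) = dg_smul (AOm1 D) c (incl_Om D a)"
    unfolding AOm1_def incl_Om_def by (auto simp: fun_eq_iff)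
next
  fix m n a b assume "a \<in> dg_elems D m" "b \<in> dg_elems D n"
  then show "incl_Om D (dg_mul D a b) = dg_mul (AOm1 D) (incl_Om D a) (incl_Om D b)"
    by (rule incl_Om_mul)
next
  show "incl_Om D (dg_one D) = dg_one (AOm1 D)" unfolding incl_Om_def AOm1_def by simp
next
  fix n a assume a: "a \<in> dg_elems D n"
  show "incl_Om D (dg_d D a) = dg_d (AOm1 D) (incl_Om D a)"
    unfolding AOm1_def incl_Om_def by (auto simp: fun_eq_iff)
qed

lemma ev0_incl: "ev0 (incl_Om D a) = a" unfolding ev0_def incl_Om_def by simp

lemma ev1_incl: assumes "a \<in> dg_elems D n" shows "ev1 D (incl_Om D a) = a"
proof (cases "a = dg_zero D")
  case True
  then have "{i. fst (incl_Om D a) i \<noteq> dg_zero D} = {}" unfolding incl_Om_def by auto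
  then show ?thesis unfolding ev1_def using True by simp
next
  case False
  then have "{i. fst (incl_Om D a) i \<noteq> dg_zero D} = {0}" unfolding incl_Om_def by auto
  then show ?thesis unfolding ev1_def using assms by (simp add: incl_Om_def)
qed

end

lemma vsum_additive:
  assumes D1: "dg_algebra D1" and D2: "dg_algebra D2"
    and h_closed: "\<And>a. a \<in> dg_elems D1 n \<Longrightarrow> h a \<in> dg_elems D2 m"
    and hadd: "\<And>a b. a \<in> dg_elems D1 n \<Longrightarrow> b \<in> dg_elems D1 n \<Longrightarrow> h (dg_add D1 a b) = dg_add D2 (h a) (h b)"
    and h0: "h (dg_zero D1) = dg_zero D2"
  shows "finite S \<Longrightarrow> (\<And>i. i \<in> S \<Longrightarrow> f i \<in> dg_elems D1 n) \<Longrightarrow> h (vsum D1 f S) = vsum D2 (\<lambda>i. h (f i)) S"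
proof (induction S rule: finite_induct)
  case empty then show ?case using h0 by (simp add: dg_algebra.vsum_empty[OF D1] dg_algebra.vsum_empty[OF D2])
next
  case (insert i S)
  have "h (vsum D1 f (insert i S)) = h (dg_add D1 (f i) (vsum D1 f S))"
    using insert dg_algebra.vsum_insert[OF D1, of S i f n] by simp
  also have "\<dots> = dg_add D2 (h (f i)) (h (vsum D1 f S))"
    using insert by (intro hadd) (auto intro!: dg_algebra.vsum_closed'[OF D1])
  also have "\<dots> = vsum D2 (\<lambda>i. h (f i)) (insert i S)"
    using insert dg_algebra.vsum_insert[OF D2, of S i "\<lambda>i. h (f i)" m] h_closed by simp
  finally show ?case .
qed

lemma dgmor_closed[intro]: "dgmor D1 D2 f \<Longrightarrow> a \<in> dg_elems D1 n \<Longrightarrow> f a \<in> dg_elems D2 n"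
  unfolding dgmor_def by blast
lemma dgmor_add: "dgmor D1 D2 f \<Longrightarrow> a \<in> dg_elems D1 n \<Longrightarrow> b \<in> dg_elems D1 n \<Longrightarrow>
   f (dg_add D1 a b) = dg_add D2 (f a) (f b)"
  unfolding dgmor_def by blast
lemma dgmor_smul: "dgmor D1 D2 f \<Longrightarrow> a \<in> dg_elems D1 n \<Longrightarrow> f (dg_smul D1 c a) = dg_smul D2 c (f a)"
  unfolding dgmor_def by blast
lemma dgmor_mul: "dgmor D1 D2 f \<Longrightarrow> a \<in> dg_elems D1 m \<Longrightarrow> b \<in> dg_elems D1 n \<Longrightarrow>
   f (dg_mul D1 a b) = dg_mul D2 (f a) (f b)"
  unfolding dgmor_def by blast
lemma dgmor_one: "dgmor D1 D2 f \<Longrightarrow> f (dg_one D1) = dg_one D2"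
  unfolding dgmor_def by blast
lemma dgmor_d: "dgmor D1 D2 f \<Longrightarrow> a \<in> dg_elems D1 n \<Longrightarrow> f (dg_d D1 a) = dg_d D2 (f a)"
  unfolding dgmor_def by blast

lemma dgmor_zero: assumes "dg_algebra D1" "dg_algebra D2" "dgmor D1 D2 f" shows "f (dg_zero D1) = dg_zero D2"
proof -
  have "f (dg_zero D1) = f (dg_smul D1 0 (dg_zero D1))" using dg_algebra.smul_zero_right[OF assms(1)] by simp
  also have "\<dots> = dg_smul D2 0 (f (dg_zero D1))" using dgmor_smul[OF assms(3), of "dg_zero D1" 0]
    dg_algebra.zero_closed[OF assms(1)] by simp
  also have "\<dots> = dg_zero D2" using dg_algebra.smul_zero_left[OF assms(2) dgmor_closed[OF assms(3) dg_algebra.zero_closed[OF assms(1)]]] .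
  finally show ?thesis .
qed

lemma dgmor_comp: assumes f: "dgmor D1 D2 f" and g: "dgmor D2 D3 g" shows "dgmor D1 D3 (g \<circ> f)"
  unfolding dgmor_def[of D1 D3] comp_def
  by (intro conjI allI ballI)
    (simp_all add: dgmor_closed[OF f] dgmor_closed[OF g] dgmor_add[OF f] dgmor_smul[OF f]
      dgmor_mul[OF f] dgmor_one[OF f] dgmor_one[OF g] dgmor_d[OF f],
     (metis dgmor_closed[OF f] dgmor_add[OF g] dgmor_smul[OF g] dgmor_mul[OF g] dgmor_d[OF g])+)

definition dg_pow :: "('k, 'a) dga \<Rightarrow> 'a \<Rightarrow> nat \<Rightarrow> 'a" where
  "dg_pow D z k = foldr (dg_mul D) (replicate k z) (dg_one D)"

lemma dg_pow_0[simp]: "dg_pow D z 0 = dg_one D" by (simp add: dg_pow_def)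
lemma dg_pow_Suc: "dg_pow D z (Suc k) = dg_mul D z (dg_pow D z k)" by (simp add: dg_pow_def)

context dg_algebra
begin

lemma gdeg_eq: assumes "a \<in> dg_elems D n" "a \<noteq> dg_zero D" shows "gdeg D a = n"
proof -
  have "a \<in> dg_elems D (gdeg D a)" unfolding gdeg_def using assms(1) by (rule someI)
  then show ?thesis using elems_disjoint assms by blast
qed

lemma dg_pow_closed[intro]: "z \<in> dg_elems D r \<Longrightarrow> dg_pow D z k \<in> dg_elems D (int k * r)"
proof (induction k)
  case 0 then show ?case by simp
next
  case (Suc k)
  then show ?case using mul_closed[of z r "dg_pow D z k" "int k * r"] by (simp add: dg_pow_Suc algebra_simps)
qed

lemma dg_pow_add: assumes "z \<in> dg_elems D r" shows "dg_mul D (dg_pow D z k) (dg_pow D z k') = dg_pow D z (k + k')"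
proof (induction k)
  case 0 then show ?case using one_mul[OF dg_pow_closed[OF assms]] by simp
next
  case (Suc k)
  have "dg_mul D (dg_pow D z (Suc k)) (dg_pow D z k') = dg_mul D z (dg_mul D (dg_pow D z k) (dg_pow D z k'))"
    unfolding dg_pow_Suc using mul_assoc[OF assms dg_pow_closed[OF assms] dg_pow_closed[OF assms]] .
  then show ?case using Suc by (simp add: dg_pow_Suc)
qed

lemma dg_pow_odd_eq_zero: assumes "z \<in> dg_elems D r" "odd r" "2 \<le> k" shows "dg_pow D z k = dg_zero D"
proof -
  obtain k' where k: "k = Suc (Suc k')" using assms(3) by (metis add_2_eq_Suc le_Suc_ex)
  have "dg_pow D z k = dg_mul D z (dg_mul D z (dg_pow D z k'))" by (simp add: k dg_pow_Suc)
  also have "\<dots> = dg_mul D (dg_mul D z z) (dg_pow D z k')"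
    using mul_assoc[OF assms(1) assms(1) dg_pow_closed[OF assms(1)]] by simp
  also have "\<dots> = dg_zero D" using odd_square_eq_zero[OF assms(1,2)] mul_zero_left[OF dg_pow_closed[OF assms(1)]] by simp
  finally show ?thesis .
qed

lemma mul_monomial_terms: assumes u: "u \<in> dg_elems D s" and v: "v \<in> dg_elems D s'" and z: "z \<in> dg_elems D r"
  shows "dg_mul D (dg_mul D u (dg_pow D z k)) (dg_mul D v (dg_pow D z k')) =
    dg_smul D (sgn_int (int k * r * s')) (dg_mul D (dg_mul D u v) (dg_pow D z (k + k')))"
proof -
  let ?P = "dg_pow D z k" and ?Q = "dg_pow D z k'"
  have P: "?P \<in> dg_elems D (int k * r)" and Q: "?Q \<in> dg_elems D (int k' * r)" using z by auto
  have vQ: "dg_mul D v ?Q \<in> dg_elems D (s' + int k' * r)" using v Q by blast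
  have vP: "dg_mul D v ?P \<in> dg_elems D (s' + int k * r)" using v P by blast
  have "dg_mul D (dg_mul D u ?P) (dg_mul D v ?Q) = dg_mul D u (dg_mul D ?P (dg_mul D v ?Q))"
    using mul_assoc[OF u P vQ] .
  also have "dg_mul D ?P (dg_mul D v ?Q) = dg_mul D (dg_mul D ?P v) ?Q"
    using mul_assoc[OF P v Q] by simp
  also have "dg_mul D ?P v = dg_smul D (sgn_int (int k * r * s')) (dg_mul D v ?P)"
    using mul_commute[OF P v] .
  also have "dg_mul D (dg_smul D (sgn_int (int k * r * s')) (dg_mul D v ?P)) ?Q =
     dg_smul D (sgn_int (int k * r * s')) (dg_mul D (dg_mul D v ?P) ?Q)"
    using mul_smul_left[OF vP Q] .
  also have "dg_mul D (dg_mul D v ?P) ?Q = dg_mul D v (dg_pow D z (k + k'))"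
    using mul_assoc[OF v P Q] dg_pow_add[OF z] by simp
  also have "dg_mul D u (dg_smul D (sgn_int (int k * r * s')) (dg_mul D v (dg_pow D z (k + k')))) =
     dg_smul D (sgn_int (int k * r * s')) (dg_mul D u (dg_mul D v (dg_pow D z (k + k'))))"
    using mul_smul_right[OF u, of _ "s' + int (k + k') * r"] v dg_pow_closed[OF z] by blast
  also have "dg_mul D u (dg_mul D v (dg_pow D z (k + k'))) = dg_mul D (dg_mul D u v) (dg_pow D z (k + k'))"
    using mul_assoc[OF u v dg_pow_closed[OF z]] by simp
  finally show ?thesis .
qed

end

section \<open>Adjoining one free generator\<close>

lemma free_onD: assumes "free_on C B \<phi> X" "b \<in> dg_elems B n"
  shows "\<exists>!c :: 'b multiset \<Rightarrow> 'c.
        (\<forall>m. c m \<in> dg_elems C (n - mdeg B m)) \<and>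
        finite {m. c m \<noteq> dg_zero C} \<and>
        (\<forall>m. c m \<noteq> dg_zero C \<longrightarrow> adm_mon B X m) \<and>
        b = vsum B (\<lambda>m. dg_mul B (\<phi> (c m)) (mon B m)) {m. c m \<noteq> dg_zero C}"
proof -
  have "\<forall>n. \<forall>b\<in>dg_elems B n. \<exists>!c :: 'b multiset \<Rightarrow> 'c.
        (\<forall>m. c m \<in> dg_elems C (n - mdeg B m)) \<and>
        finite {m. c m \<noteq> dg_zero C} \<and>
        (\<forall>m. c m \<noteq> dg_zero C \<longrightarrow> adm_mon B X m) \<and>
        b = vsum B (\<lambda>m. dg_mul B (\<phi> (c m)) (mon B m)) {m. c m \<noteq> dg_zero C}"
    using assms(1) unfolding free_on_def by (elim conjE)
  then show ?thesis using assms(2) by (elim allE[of _ n] ballE[of _ _ b]) auto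
qed

lemma sum_mset_nonpos: "(\<And>y. y \<in># m \<Longrightarrow> g y \<le> (0::int)) \<Longrightarrow> sum_mset (image_mset g m) \<le> 0"
  by (induction m) (auto simp: add_nonpos_nonpos)

lemma resolving_alg_pos_degree_zero: assumes "resolving_alg D" "0 < n" "b \<in> dg_elems D n"
  shows "b = dg_zero D"
proof -
  have dD: "dg_algebra D" using assms(1) unfolding resolving_alg_def dg_algebra_def by blast
  obtain X where X: "resolving_on kdga D (unit_map D) X"
    using assms(1) unfolding resolving_alg_def resolving_def by blast
  have Xdeg: "\<forall>x\<in>X. \<exists>n\<le>0. x \<in> dg_elems D n" and fr: "free_on kdga D (unit_map D) X"
    using X unfolding resolving_on_def by blast+
  have Xnz: "\<forall>x\<in>X. x \<noteq> dg_zero D" using fr unfolding free_on_def by blast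
  obtain c :: "'b multiset \<Rightarrow> 'a" where c: "\<forall>m. c m \<in> dg_elems kdga (n - mdeg D m)"
      "\<forall>m. c m \<noteq> dg_zero kdga \<longrightarrow> adm_mon D X m"
      "b = vsum D (\<lambda>m. dg_mul D (unit_map D (c m)) (mon D m)) {m. c m \<noteq> dg_zero kdga}"
    using free_onD[OF fr assms(3)] by (elim ex1E conjE) blast
  have "{m. c m \<noteq> dg_zero kdga} = {}"
  proof (rule ccontr)
    assume "{m. c m \<noteq> dg_zero kdga} \<noteq> {}"
    then obtain m where m: "c m \<noteq> dg_zero kdga" by blast
    then have "n - mdeg D m = 0" using c(1) by (auto simp: kdga_def split: if_splits)
    moreover have "mdeg D m \<le> 0"
    proof -
      have "set_mset m \<subseteq> X" using c(2) m unfolding adm_mon_def by blast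
      then have "\<And>y. y \<in># m \<Longrightarrow> gdeg D y \<le> 0"
        using Xdeg Xnz dg_algebra.gdeg_eq[OF dD] by fastforce
      then show ?thesis unfolding mdeg_def by (rule sum_mset_nonpos)
    qed
    ultimately show False using assms(2) by simp
  qed
  then show ?thesis using c(3) dg_algebra.vsum_empty[OF dD] by simp
qed

lemma replicate_mset_count_eq: "set_mset m \<subseteq> {x} \<Longrightarrow> m = replicate_mset (count m x) x"
  by (rule multiset_eqI) (auto simp: count_eq_zero_iff)

lemma mon_replicate: "mon D (replicate_mset k x) = dg_pow D x k"
proof -
  have "(SOME l. mset l = replicate_mset k x) = replicate k x"
  proof (rule some_equality)
    fix l assume l: "mset l = replicate_mset k x"
    then have "length l = k" by (metis size_mset size_replicate_mset)
    moreover have "\<forall>y\<in>set l. y = x" using l by (metis in_replicate_mset set_mset_mset)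
    ultimately show "l = replicate k x" using replicate_length_same[of l x] by simp
  qed simp
  then show ?thesis unfolding mon_def dg_pow_def by simp
qed

lemma mdeg_replicate: "mdeg D (replicate_mset k x) = int k * gdeg D x"
  unfolding mdeg_def by (induction k) (auto simp: algebra_simps)

lemma mdeg_empty[simp]: "mdeg D {#} = 0" unfolding mdeg_def by simp

lemma mon_empty[simp]: "mon D {#} = dg_one D"
  using mon_replicate[of D 0 undefined] by simp

lemma free_on_inj:
  fixes B' :: "('k::field_char_0, 'b1) dga" and B :: "('k, 'b) dga"
  assumes dB': "dg_algebra B'" and dB: "dg_algebra B" and jm: "dgmor B' B j" and fr: "free_on B' B j X"
    and a: "a \<in> dg_elems B' n" and ja: "j a = dg_zero B"
  shows "a = dg_zero B'"
proof -
  interpret B': dg_algebra B' by fact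
  interpret B: dg_algebra B by fact
  let ?Q = "\<lambda>c :: 'b multiset \<Rightarrow> 'b1. (\<forall>m. c m \<in> dg_elems B' (n - mdeg B m)) \<and>
        finite {m. c m \<noteq> dg_zero B'} \<and>
        (\<forall>m. c m \<noteq> dg_zero B' \<longrightarrow> adm_mon B X m) \<and>
        dg_zero B = vsum B (\<lambda>m. dg_mul B (j (c m)) (mon B m)) {m. c m \<noteq> dg_zero B'}"
  have ex: "\<exists>!c. ?Q c" using free_onD[OF fr B.zero_closed[of n]] .
  let ?c1 = "\<lambda>m :: 'b multiset. if m = {#} then a else dg_zero B'"
  have s1: "{m. ?c1 m \<noteq> dg_zero B'} \<subseteq> {{#}}" by auto
  have "vsum B (\<lambda>m. dg_mul B (j (?c1 m)) (mon B m)) {m. ?c1 m \<noteq> dg_zero B'} = dg_zero B"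
    using finite_subset[OF s1] s1 ja dgmor_zero[OF dB' dB jm]
    by (intro B.vsum_neutral) (auto simp: B.mul_zero_left[OF B.one_closed])
  then have q1: "?Q ?c1" using a finite_subset[OF s1] by (auto simp: adm_mon_def)
  have q2: "?Q (\<lambda>m. dg_zero B')" by simp
  have "?c1 = (\<lambda>m. dg_zero B')"
    using the1_equality[where P="?Q", OF ex q1] the1_equality[where P="?Q", OF ex q2] by simp
  then show ?thesis by (metis (mono_tags))
qed

lemma boundary_of_generator_in_base:
  fixes B' :: "('k::field_char_0, 'b1) dga" and B :: "('k, 'b) dga"
  assumes rB': "resolving_alg B'" and dB': "dg_algebra B'" and dB: "dg_algebra B" and jm: "dgmor B' B j"
    and fr: "free_on B' B j {x}" and xr: "x \<in> dg_elems B r" and r: "r \<le> 0"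
  shows "\<exists>y\<in>dg_elems B' (r + 1). j y = dg_d B x"
proof -
  interpret B': dg_algebra B' by fact
  interpret B: dg_algebra B by fact
  have dx: "dg_d B x \<in> dg_elems B (r + 1)" using xr by blast
  have xnz: "x \<noteq> dg_zero B" using fr unfolding free_on_def by blast
  have gdeg_x: "gdeg B x = r" using B.gdeg_eq[OF xr xnz] .
  obtain c :: "'b multiset \<Rightarrow> 'b1" where c: "\<forall>m. c m \<in> dg_elems B' (r + 1 - mdeg B m)"
      "finite {m. c m \<noteq> dg_zero B'}" "\<forall>m. c m \<noteq> dg_zero B' \<longrightarrow> adm_mon B {x} m"
      "dg_d B x = vsum B (\<lambda>m. dg_mul B (j (c m)) (mon B m)) {m. c m \<noteq> dg_zero B'}"
    using free_onD[OF fr dx] by (elim ex1E conjE) blast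
  have z: "c m = dg_zero B'" if m: "m \<noteq> {#}" for m
  proof (rule ccontr)
    assume nz: "c m \<noteq> dg_zero B'"
    then have "adm_mon B {x} m" using c(3) by blast
    then have "set_mset m \<subseteq> {x}" unfolding adm_mon_def by blast
    then have mr: "m = replicate_mset (count m x) x" by (rule replicate_mset_count_eq)
    then have k: "count m x \<ge> 1" using m by (metis less_one not_le replicate_mset_0)
    have "mdeg B m = int (count m x) * r" using mr mdeg_replicate[of B "count m x" x] gdeg_x by metis
    then have "r + 1 - mdeg B m = 1 + (1 - int (count m x)) * r" by (simp add: algebra_simps)
    then have cm: "c m \<in> dg_elems B' (1 + (1 - int (count m x)) * r)"
      using c(1) by metis
    have "0 \<le> (1 - int (count m x)) * r" using k r by (intro mult_nonpos_nonpos) auto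
    then have "0 < 1 + (1 - int (count m x)) * r" by simp
    then show False using resolving_alg_pos_degree_zero[OF rB' _ cm] nz by blast
  qed
  let ?y = "c {#}"
  have y: "?y \<in> dg_elems B' (r + 1)" using c(1) by (metis diff_zero mdeg_empty)
  have s: "{m. c m \<noteq> dg_zero B'} \<subseteq> {{#}}" using z by blast
  have jy: "dg_mul B (j ?y) (dg_one B) \<in> dg_elems B (r + 1)" using dgmor_closed[OF jm y] by (simp add: B.mul_one)
  have "dg_d B x = vsum B (\<lambda>m. dg_mul B (j (c m)) (mon B m)) {{#}}"
    unfolding c(4) using s jy dgmor_zero[OF dB' dB jm] B.mul_zero_left[OF B.one_closed]
    by (intro B.vsum_mono_neutral[symmetric, of _ _ _ "r + 1"]) auto
  also have "\<dots> = j ?y" using jy B.mul_one[OF dgmor_closed[OF jm y]] by simp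
  finally show ?thesis using y by metis
qed

text \<open>Used twice with the same coefficients: \<mu>(m) = x^m in B and \<mu>(m) = e^m in A, so that
  the extension along x acts coefficientwise.\<close>
locale lin_comb = B': dg_algebra B' + D: dg_algebra D
  for B' :: "('k::field_char_0, 'b1) dga" and D :: "('k, 'd) dga" +
  fixes g :: "'b1 \<Rightarrow> 'd" and \<mu> :: "'i \<Rightarrow> 'd" and \<delta> :: "'i \<Rightarrow> int" and adm :: "'i \<Rightarrow> bool"
  assumes g: "dgmor B' D g" and \<mu>: "\<And>m. adm m \<Longrightarrow> \<mu> m \<in> dg_elems D (\<delta> m)"
begin

definition lc_term :: "('i \<Rightarrow> 'b1) \<Rightarrow> 'i \<Rightarrow> 'd" where
  "lc_term c m = dg_mul D (g (c m)) (\<mu> m)"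

abbreviation supp :: "('i \<Rightarrow> 'b1) \<Rightarrow> 'i set" where
  "supp c \<equiv> {m. c m \<noteq> dg_zero B'}"

definition admissible :: "int \<Rightarrow> ('i \<Rightarrow> 'b1) \<Rightarrow> bool" where
  "admissible n c \<longleftrightarrow> (\<forall>m. c m \<in> dg_elems B' (n - \<delta> m)) \<and> finite (supp c) \<and> (\<forall>m. c m \<noteq> dg_zero B' \<longrightarrow> adm m)"

lemma g_zero: "g (dg_zero B') = dg_zero D"
  using dgmor_zero[OF B'.dg_algebra_axioms D.dg_algebra_axioms g] .

lemma lc_term_closed: "adm m \<Longrightarrow> c m \<in> dg_elems B' (n - \<delta> m) \<Longrightarrow> lc_term c m \<in> dg_elems D n"
  unfolding lc_term_def using dgmor_closed[OF g] \<mu> by (intro D.mul_closed'[of _ "n - \<delta> m" _ "\<delta> m"]) auto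

lemma lc_term_zero: "adm m \<Longrightarrow> c m = dg_zero B' \<Longrightarrow> lc_term c m = dg_zero D"
  unfolding lc_term_def using g_zero D.mul_zero_left[OF \<mu>] by simp

lemma lc_closed: "admissible n c \<Longrightarrow> vsum D (lc_term c) (supp c) \<in> dg_elems D n"
  unfolding admissible_def by (intro D.vsum_closed') (auto intro: lc_term_closed)

lemma lc_mono_neutral: assumes "admissible n c" "finite T" "supp c \<subseteq> T" "\<And>m. m \<in> T \<Longrightarrow> adm m"
  shows "vsum D (lc_term c) T = vsum D (lc_term c) (supp c)"
  using assms unfolding admissible_def
  by (intro D.vsum_mono_neutral[of _ _ _ n]) (auto intro: lc_term_zero lc_term_closed)

lemma admissible_add: assumes "admissible n ca" "admissible n cb"
  shows "admissible n (\<lambda>m. dg_add B' (ca m) (cb m))"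
    and "supp (\<lambda>m. dg_add B' (ca m) (cb m)) \<subseteq> supp ca \<union> supp cb"
proof -
  show s: "supp (\<lambda>m. dg_add B' (ca m) (cb m)) \<subseteq> supp ca \<union> supp cb" by auto
  have "\<forall>m. dg_add B' (ca m) (cb m) \<noteq> dg_zero B' \<longrightarrow> adm m" using s assms unfolding admissible_def by blast
  then show "admissible n (\<lambda>m. dg_add B' (ca m) (cb m))"
    using assms finite_subset[OF s] unfolding admissible_def by auto
qed

lemma lc_add: assumes "admissible n ca" "admissible n cb"
  shows "vsum D (lc_term (\<lambda>m. dg_add B' (ca m) (cb m))) (supp (\<lambda>m. dg_add B' (ca m) (cb m))) =
         dg_add D (vsum D (lc_term ca) (supp ca)) (vsum D (lc_term cb) (supp cb))"
proof -
  let ?c = "\<lambda>m. dg_add B' (ca m) (cb m)"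
  let ?T = "supp ca \<union> supp cb"
  have fT: "finite ?T" using assms unfolding admissible_def by auto
  have aT: "\<And>m. m \<in> ?T \<Longrightarrow> adm m" using assms unfolding admissible_def by auto
  have "vsum D (lc_term ?c) (supp ?c) = vsum D (lc_term ?c) ?T"
    using lc_mono_neutral[OF admissible_add(1)[OF assms] fT admissible_add(2)[OF assms] aT] by simp
  also have "\<dots> = vsum D (\<lambda>m. dg_add D (lc_term ca m) (lc_term cb m)) ?T"
  proof (rule vsum_cong[OF fT])
    fix m assume m: "m \<in> ?T"
    have "ca m \<in> dg_elems B' (n - \<delta> m)" "cb m \<in> dg_elems B' (n - \<delta> m)" using assms unfolding admissible_def by auto
    then show "lc_term ?c m = dg_add D (lc_term ca m) (lc_term cb m)"
      unfolding lc_term_def using dgmor_add[OF g] dgmor_closed[OF g] D.distrib_right \<mu>[OF aT[OF m]] by metis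
  qed
  also have "\<dots> = dg_add D (vsum D (lc_term ca) ?T) (vsum D (lc_term cb) ?T)"
    using assms aT unfolding admissible_def by (intro D.vsum_add[OF fT, of _ n]) (auto intro: lc_term_closed)
  also have "\<dots> = dg_add D (vsum D (lc_term ca) (supp ca)) (vsum D (lc_term cb) (supp cb))"
    using lc_mono_neutral[OF assms(1) fT _ aT] lc_mono_neutral[OF assms(2) fT _ aT] by auto
  finally show ?thesis .
qed

lemma admissible_smul: assumes "admissible n ca"
  shows "admissible n (\<lambda>m. dg_smul B' k (ca m))" and "supp (\<lambda>m. dg_smul B' k (ca m)) \<subseteq> supp ca"
proof -
  show s: "supp (\<lambda>m. dg_smul B' k (ca m)) \<subseteq> supp ca" by auto
  have "\<forall>m. dg_smul B' k (ca m) \<noteq> dg_zero B' \<longrightarrow> adm m" using s assms unfolding admissible_def by blast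
  then show "admissible n (\<lambda>m. dg_smul B' k (ca m))"
    using assms finite_subset[OF s] unfolding admissible_def by auto
qed

lemma lc_smul: assumes "admissible n ca"
  shows "vsum D (lc_term (\<lambda>m. dg_smul B' k (ca m))) (supp (\<lambda>m. dg_smul B' k (ca m))) =
         dg_smul D k (vsum D (lc_term ca) (supp ca))"
proof -
  let ?c = "\<lambda>m. dg_smul B' k (ca m)"
  have fT: "finite (supp ca)" using assms unfolding admissible_def by auto
  have aT: "\<And>m. m \<in> supp ca \<Longrightarrow> adm m" using assms unfolding admissible_def by auto
  have "vsum D (lc_term ?c) (supp ?c) = vsum D (lc_term ?c) (supp ca)"
    using lc_mono_neutral[OF admissible_smul(1)[OF assms] fT admissible_smul(2)[OF assms] aT] by simp
  also have "\<dots> = vsum D (\<lambda>m. dg_smul D k (lc_term ca m)) (supp ca)"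
  proof (rule vsum_cong[OF fT])
    fix m assume m: "m \<in> supp ca"
    have "ca m \<in> dg_elems B' (n - \<delta> m)" using assms unfolding admissible_def by auto
    then show "lc_term ?c m = dg_smul D k (lc_term ca m)"
      unfolding lc_term_def using dgmor_smul[OF g] dgmor_closed[OF g] D.mul_smul_left \<mu>[OF aT[OF m]] by metis
  qed
  also have "\<dots> = dg_smul D k (vsum D (lc_term ca) (supp ca))"
    using assms aT unfolding admissible_def by (intro D.vsum_smul[OF fT, of _ n]) (auto intro: lc_term_closed)
  finally show ?thesis .
qed

lemma admissible_single: assumes "c0 \<in> dg_elems B' (n - \<delta> m0)" "adm m0"
  shows "admissible n (\<lambda>m. if m = m0 then c0 else dg_zero B')"
  using assms unfolding admissible_def by (auto intro: finite_subset[of _ "{m0}"])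

lemma lc_single: assumes "c0 \<in> dg_elems B' (n - \<delta> m0)" "adm m0"
  shows "vsum D (lc_term (\<lambda>m. if m = m0 then c0 else dg_zero B')) (supp (\<lambda>m. if m = m0 then c0 else dg_zero B')) =
    dg_mul D (g c0) (\<mu> m0)"
proof (cases "c0 = dg_zero B'")
  case True
  then have "supp (\<lambda>m. if m = m0 then c0 else dg_zero B') = {}" by auto
  then show ?thesis using True g_zero D.mul_zero_left[OF \<mu>[OF assms(2)]] by simp
next
  case False
  let ?c = "\<lambda>m. if m = m0 then c0 else dg_zero B'"
  have "supp ?c = {m0}" using False by auto
  moreover have "vsum D (lc_term ?c) {m0} = lc_term ?c m0" using lc_term_closed[of m0 ?c n] assms by simp
  ultimately show ?thesis unfolding lc_term_def by simp
qed

lemma admissible_zero: "admissible n (\<lambda>m. dg_zero B')"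
  unfolding admissible_def by auto

end

locale free_ext = B': dg_algebra B' + B: dg_algebra B + A: dg_algebra A
  for B' :: "('k::field_char_0, 'b1) dga" and B :: "('k, 'b) dga" and A :: "('k, 'a) dga" +
  fixes j :: "'b1 \<Rightarrow> 'b" and x :: 'b and r :: int and h' :: "'b1 \<Rightarrow> 'a" and e :: 'a and y :: 'b1
  assumes j: "dgmor B' B j" and fr: "free_on B' B j {x}" and xr: "x \<in> dg_elems B r"
    and h': "dgmor B' A h'" and e: "e \<in> dg_elems A r" and y: "y \<in> dg_elems B' (r + 1)"
    and jy: "j y = dg_d B x" and de: "dg_d A e = h' y"
begin

abbreviation adm :: "'b multiset \<Rightarrow> bool" where "adm m \<equiv> adm_mon B {x} m"

lemma x_nonzero: "x \<noteq> dg_zero B" using fr unfolding free_on_def by blast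

lemma gdeg_x: "gdeg B x = r" using B.gdeg_eq[OF xr x_nonzero] .

lemma adm_replicate: "adm m \<Longrightarrow> m = replicate_mset (count m x) x"
  unfolding adm_mon_def by (intro replicate_mset_count_eq) blast

lemma adm_iff: "adm (replicate_mset k x) \<longleftrightarrow> (odd r \<longrightarrow> k \<le> 1)"
  unfolding adm_mon_def using gdeg_x by auto

lemma mon_adm: "adm m \<Longrightarrow> mon B m = dg_pow B x (count m x)"
  using adm_replicate mon_replicate by metis

lemma mdeg_adm: "adm m \<Longrightarrow> mdeg B m = int (count m x) * r"
  using adm_replicate mdeg_replicate gdeg_x by metis

lemma mon_closed: "adm m \<Longrightarrow> mon B m \<in> dg_elems B (mdeg B m)"
  using mon_adm mdeg_adm B.dg_pow_closed[OF xr] by simp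

lemma pow_e_closed: "adm m \<Longrightarrow> dg_pow A e (count m x) \<in> dg_elems A (mdeg B m)"
  using mdeg_adm A.dg_pow_closed[OF e] by simp

sublocale LB: lin_comb B' B j "mon B" "mdeg B" adm
  by (unfold_locales) (auto intro: j mon_closed)

sublocale LA: lin_comb B' A h' "\<lambda>m. dg_pow A e (count m x)" "mdeg B" adm
  by (unfold_locales) (auto intro: h' pow_e_closed)

lemma LB_lc_term_eq: "LB.lc_term c = (\<lambda>m. dg_mul B (j (c m)) (mon B m))"
  by (rule ext) (simp add: LB.lc_term_def)

definition expands :: "int \<Rightarrow> 'b \<Rightarrow> ('b multiset \<Rightarrow> 'b1) \<Rightarrow> bool" where
  "expands n b c \<longleftrightarrow> LB.admissible n c \<and> b = vsum B (LB.lc_term c) (LB.supp c)"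

lemma expands_ex1: assumes "b \<in> dg_elems B n" shows "\<exists>!c. expands n b c"
  using free_onD[OF fr assms] unfolding expands_def LB.admissible_def LB_lc_term_eq by (simp add: conj_assoc)

lemma expands_ex: assumes "b \<in> dg_elems B n" obtains c where "expands n b c"
  using expands_ex1[OF assms] by blast

lemma expands_unique: "b \<in> dg_elems B n \<Longrightarrow> expands n b c1 \<Longrightarrow> expands n b c2 \<Longrightarrow> c1 = c2"
  using expands_ex1 by blast

lemma expands_zero: "expands n (dg_zero B) (\<lambda>m. dg_zero B')"
  unfolding expands_def using LB.admissible_zero by simp

text \<open>gdeg B 0 is an arbitrary degree, which is harmless: the zero coefficient function is the
  unique expansion of 0 in every degree.\<close>
definition coeffs_of :: "'b \<Rightarrow> 'b multiset \<Rightarrow> 'b1" where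
  "coeffs_of b = (THE c. expands (gdeg B b) b c)"

definition extension :: "'b \<Rightarrow> 'a" where
  "extension b = vsum A (LA.lc_term (coeffs_of b)) (LA.supp (coeffs_of b))"

lemma extension_eq: assumes "b \<in> dg_elems B n" "expands n b c"
  shows "extension b = vsum A (LA.lc_term c) (LA.supp c)"
proof (cases "b = dg_zero B")
  case True
  have c0: "c = (\<lambda>m. dg_zero B')" using expands_unique[OF assms(1) assms(2)] expands_zero True by simp
  have "coeffs_of b = (\<lambda>m. dg_zero B')" unfolding coeffs_of_def True
    using the1_equality[where P="expands (gdeg B (dg_zero B)) (dg_zero B)", OF expands_ex1[OF B.zero_closed] expands_zero] .
  then show ?thesis unfolding extension_def c0 by simp
next
  case False
  then have "gdeg B b = n" using B.gdeg_eq[OF assms(1)] by simp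
  then have "coeffs_of b = c" unfolding coeffs_of_def using the1_equality[where P="expands n b", OF expands_ex1[OF assms(1)] assms(2)] by simp
  then show ?thesis unfolding extension_def by simp
qed

lemma extension_zero[simp]: "extension (dg_zero B) = dg_zero A"
  using extension_eq[OF B.zero_closed[of 0] expands_zero] by simp

lemma extension_closed: assumes "b \<in> dg_elems B n" shows "extension b \<in> dg_elems A n"
proof -
  obtain c where c: "expands n b c" using expands_ex[OF assms] .
  have g: "LA.admissible n c" using c unfolding expands_def by blast
  show ?thesis unfolding extension_eq[OF assms c] by (rule LA.lc_closed[OF g])
qed

lemma extension_add: assumes "a \<in> dg_elems B n" "b \<in> dg_elems B n"
  shows "extension (dg_add B a b) = dg_add A (extension a) (extension b)"
proof -
  obtain ca where ca: "expands n a ca" using expands_ex[OF assms(1)] .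
  obtain cb where cb: "expands n b cb" using expands_ex[OF assms(2)] .
  let ?c = "\<lambda>m. dg_add B' (ca m) (cb m)"
  have g: "LB.admissible n ca" "LB.admissible n cb" using ca cb unfolding expands_def by auto
  have ea: "a = vsum B (LB.lc_term ca) (LB.supp ca)" and eb: "b = vsum B (LB.lc_term cb) (LB.supp cb)"
    using ca cb unfolding expands_def by blast+
  have "expands n (dg_add B a b) ?c"
    unfolding expands_def using LB.admissible_add(1)[OF g] LB.lc_add[OF g] ea eb by metis
  then have "extension (dg_add B a b) = vsum A (LA.lc_term ?c) (LA.supp ?c)" using extension_eq assms by blast
  also have "\<dots> = dg_add A (vsum A (LA.lc_term ca) (LA.supp ca)) (vsum A (LA.lc_term cb) (LA.supp cb))"
    using LA.lc_add g by blast
  also have "\<dots> = dg_add A (extension a) (extension b)" using extension_eq[OF assms(1) ca] extension_eq[OF assms(2) cb] by simp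
  finally show ?thesis .
qed

lemma extension_smul: assumes "a \<in> dg_elems B n"
  shows "extension (dg_smul B k a) = dg_smul A k (extension a)"
proof -
  obtain ca where ca: "expands n a ca" using expands_ex[OF assms(1)] .
  let ?c = "\<lambda>m. dg_smul B' k (ca m)"
  have g: "LB.admissible n ca" using ca unfolding expands_def by auto
  have ea: "a = vsum B (LB.lc_term ca) (LB.supp ca)" using ca unfolding expands_def by blast
  have "expands n (dg_smul B k a) ?c"
    unfolding expands_def using LB.admissible_smul(1)[OF g] LB.lc_smul[OF g] ea by metis
  then have "extension (dg_smul B k a) = vsum A (LA.lc_term ?c) (LA.supp ?c)" using extension_eq assms by blast
  also have "\<dots> = dg_smul A k (vsum A (LA.lc_term ca) (LA.supp ca))"
    using LA.lc_smul g by blast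
  also have "\<dots> = dg_smul A k (extension a)" using extension_eq[OF assms(1) ca] by simp
  finally show ?thesis .
qed

lemma extension_term: assumes "c0 \<in> dg_elems B' (n - mdeg B m0)" "adm m0"
  shows "extension (dg_mul B (j c0) (mon B m0)) = dg_mul A (h' c0) (dg_pow A e (count m0 x))"
proof -
  let ?c = "\<lambda>m. if m = m0 then c0 else dg_zero B'"
  have bn: "dg_mul B (j c0) (mon B m0) \<in> dg_elems B n"
    using LB.lc_term_closed[of m0 "\<lambda>_. c0" n] assms unfolding LB.lc_term_def by simp
  have "expands n (dg_mul B (j c0) (mon B m0)) ?c"
    unfolding expands_def using LB.admissible_single[OF assms] LB.lc_single[OF assms] by simp
  then show ?thesis using extension_eq[OF bn] LA.lc_single[OF assms] by simp
qed

lemma extension_monomial_term: assumes "c0 \<in> dg_elems B' s" "adm (replicate_mset k x)"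
  shows "extension (dg_mul B (j c0) (dg_pow B x k)) = dg_mul A (h' c0) (dg_pow A e k)"
proof -
  have "c0 \<in> dg_elems B' ((s + int k * r) - mdeg B (replicate_mset k x))"
    using assms(1) by (simp add: mdeg_replicate gdeg_x)
  from extension_term[OF this assms(2)] show ?thesis by (simp add: mon_replicate)
qed

lemma extension_vsum: "finite S \<Longrightarrow> (\<And>i. i \<in> S \<Longrightarrow> f i \<in> dg_elems B n) \<Longrightarrow> extension (vsum B f S) = vsum A (\<lambda>i. extension (f i)) S"
  by (rule vsum_additive[OF B.dg_algebra_axioms A.dg_algebra_axioms, of n extension n]) (auto intro: extension_closed extension_add)

lemma expands_terms: assumes "expands n b c" "m \<in> LB.supp c"
  shows "adm m" "c m \<in> dg_elems B' (n - int (count m x) * r)"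
    "LB.lc_term c m = dg_mul B (j (c m)) (dg_pow B x (count m x))"
    "LB.lc_term c m \<in> dg_elems B n"
    "LA.lc_term c m = extension (LB.lc_term c m)"
proof -
  show a: "adm m" using assms unfolding expands_def LB.admissible_def by blast
  have cm: "c m \<in> dg_elems B' (n - mdeg B m)" using assms unfolding expands_def LB.admissible_def by blast
  then show "c m \<in> dg_elems B' (n - int (count m x) * r)" using mdeg_adm[OF a] by simp
  show "LB.lc_term c m = dg_mul B (j (c m)) (dg_pow B x (count m x))" unfolding LB.lc_term_def using mon_adm[OF a] by simp
  show "LB.lc_term c m \<in> dg_elems B n" using LB.lc_term_closed[of m c n, OF a cm] .
  show "LA.lc_term c m = extension (LB.lc_term c m)" unfolding LA.lc_term_def LB.lc_term_def using extension_term[OF cm a] by simp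
qed

lemma extension_expand: assumes "b \<in> dg_elems B n" "expands n b c"
  shows "extension b = vsum A (\<lambda>m. extension (LB.lc_term c m)) (LB.supp c)"
proof -
  have f: "finite (LB.supp c)" using assms unfolding expands_def LB.admissible_def by blast
  have "extension b = vsum A (LA.lc_term c) (LA.supp c)" using extension_eq[OF assms] .
  also have "\<dots> = vsum A (\<lambda>m. extension (LB.lc_term c m)) (LB.supp c)"
    by (rule vsum_cong[OF f]) (use expands_terms(5)[OF assms(2)] in simp)
  finally show ?thesis .
qed

lemma adm_replicate_count: assumes a: "adm m" shows "adm (replicate_mset (count m x) x)"
proof -
  have "replicate_mset (count m x) x = m" using adm_replicate[OF a] by simp
  then show ?thesis using a by simp
qed

lemma j_closed: "c \<in> dg_elems B' s \<Longrightarrow> j c \<in> dg_elems B s" using dgmor_closed[OF j] .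
lemma h'_closed: "c \<in> dg_elems B' s \<Longrightarrow> h' c \<in> dg_elems A s" using dgmor_closed[OF h'] .

lemma extension_mul_terms: assumes c0: "c0 \<in> dg_elems B' s0" and c1: "c1 \<in> dg_elems B' s1"
  and a0: "adm (replicate_mset k0 x)" and a1: "adm (replicate_mset k1 x)"
  shows "extension (dg_mul B (dg_mul B (j c0) (dg_pow B x k0)) (dg_mul B (j c1) (dg_pow B x k1))) =
     dg_mul A (dg_mul A (h' c0) (dg_pow A e k0)) (dg_mul A (h' c1) (dg_pow A e k1))"
proof -
  let ?\<sigma> = "sgn_int (int k0 * r * s1) :: 'k"
  have c01: "dg_mul B' c0 c1 \<in> dg_elems B' (s0 + s1)" using c0 c1 by blast
  have eqB: "dg_mul B (dg_mul B (j c0) (dg_pow B x k0)) (dg_mul B (j c1) (dg_pow B x k1)) =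
     dg_smul B ?\<sigma> (dg_mul B (j (dg_mul B' c0 c1)) (dg_pow B x (k0 + k1)))"
    using B.mul_monomial_terms[OF j_closed[OF c0] j_closed[OF c1] xr] dgmor_mul[OF j c0 c1] by simp
  have eqA: "dg_mul A (dg_mul A (h' c0) (dg_pow A e k0)) (dg_mul A (h' c1) (dg_pow A e k1)) =
     dg_smul A ?\<sigma> (dg_mul A (h' (dg_mul B' c0 c1)) (dg_pow A e (k0 + k1)))"
    using A.mul_monomial_terms[OF h'_closed[OF c0] h'_closed[OF c1] e] dgmor_mul[OF h' c0 c1] by simp
  show ?thesis
  proof (cases "adm (replicate_mset (k0 + k1) x)")
    case True
    have W: "dg_mul B (j (dg_mul B' c0 c1)) (dg_pow B x (k0 + k1)) \<in> dg_elems B ((s0 + s1) + int (k0 + k1) * r)"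
      using j_closed[OF c01] B.dg_pow_closed[OF xr] by blast
    show ?thesis unfolding eqB eqA extension_smul[OF W] extension_monomial_term[OF c01 True] ..
  next
    case False
    then have o: "odd r" "2 \<le> k0 + k1" using adm_iff by auto
    have "dg_mul B (j (dg_mul B' c0 c1)) (dg_pow B x (k0 + k1)) = dg_zero B"
      using B.dg_pow_odd_eq_zero[OF xr o] B.mul_zero_right[OF j_closed[OF c01]] by simp
    moreover have "dg_mul A (h' (dg_mul B' c0 c1)) (dg_pow A e (k0 + k1)) = dg_zero A"
      using A.dg_pow_odd_eq_zero[OF e o] A.mul_zero_right[OF h'_closed[OF c01]] by simp
    ultimately show ?thesis unfolding eqB eqA by simp
  qed
qed

lemma extension_mul_term_left: assumes c0: "c0 \<in> dg_elems B' s0" and a0: "adm (replicate_mset k0 x)" and b: "b \<in> dg_elems B q"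
  shows "extension (dg_mul B (dg_mul B (j c0) (dg_pow B x k0)) b) = dg_mul A (extension (dg_mul B (j c0) (dg_pow B x k0))) (extension b)"
proof -
  let ?T = "dg_mul B (j c0) (dg_pow B x k0)"
  obtain c where c: "expands q b c" using expands_ex[OF b] .
  let ?S = "LB.supp c"
  have f: "finite ?S" using c unfolding expands_def LB.admissible_def by blast
  have T: "?T \<in> dg_elems B (s0 + int k0 * r)" using j_closed[OF c0] B.dg_pow_closed[OF xr] by blast
  have HT: "extension ?T = dg_mul A (h' c0) (dg_pow A e k0)" using extension_monomial_term[OF c0 a0] .
  have eb: "b = vsum B (LB.lc_term c) ?S" using c unfolding expands_def by blast
  have tq: "\<And>m. m \<in> ?S \<Longrightarrow> LB.lc_term c m \<in> dg_elems B q" using expands_terms(4)[OF c] .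
  have "dg_mul B ?T b = vsum B (\<lambda>m. dg_mul B ?T (LB.lc_term c m)) ?S"
    using B.vsum_distrib_left[OF f tq T] eb by simp
  then have "extension (dg_mul B ?T b) = vsum A (\<lambda>m. extension (dg_mul B ?T (LB.lc_term c m))) ?S"
    using extension_vsum[OF f, of _ "(s0 + int k0 * r) + q"] T tq by (simp add: B.mul_closed)
  also have "\<dots> = vsum A (\<lambda>m. dg_mul A (extension ?T) (extension (LB.lc_term c m))) ?S"
  proof (rule vsum_cong[OF f])
    fix m assume m: "m \<in> ?S"
    have am: "adm (replicate_mset (count m x) x)" using adm_replicate_count[OF expands_terms(1)[OF c m]] .
    show "extension (dg_mul B ?T (LB.lc_term c m)) = dg_mul A (extension ?T) (extension (LB.lc_term c m))"
      unfolding expands_terms(3)[OF c m] HT extension_monomial_term[OF expands_terms(2)[OF c m] am]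
      by (rule extension_mul_terms[OF c0 expands_terms(2)[OF c m] a0 am])
  qed
  also have "\<dots> = dg_mul A (extension ?T) (vsum A (\<lambda>m. extension (LB.lc_term c m)) ?S)"
    using A.vsum_distrib_left[OF f _ extension_closed[OF T], of "\<lambda>m. extension (LB.lc_term c m)" q] extension_closed tq by blast
  also have "\<dots> = dg_mul A (extension ?T) (extension b)" using extension_expand[OF b c] by simp
  finally show ?thesis .
qed

lemma extension_mul: assumes a: "a \<in> dg_elems B p" and b: "b \<in> dg_elems B q"
  shows "extension (dg_mul B a b) = dg_mul A (extension a) (extension b)"
proof -
  obtain c where c: "expands p a c" using expands_ex[OF a] .
  let ?S = "LB.supp c"
  have f: "finite ?S" using c unfolding expands_def LB.admissible_def by blast
  have ea: "a = vsum B (LB.lc_term c) ?S" using c unfolding expands_def by blast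
  have tp: "\<And>m. m \<in> ?S \<Longrightarrow> LB.lc_term c m \<in> dg_elems B p" using expands_terms(4)[OF c] .
  have "dg_mul B a b = vsum B (\<lambda>m. dg_mul B (LB.lc_term c m) b) ?S"
    using B.vsum_distrib_right[OF f tp b] ea by simp
  then have "extension (dg_mul B a b) = vsum A (\<lambda>m. extension (dg_mul B (LB.lc_term c m) b)) ?S"
    using extension_vsum[OF f, of _ "p + q"] b tp by (simp add: B.mul_closed)
  also have "\<dots> = vsum A (\<lambda>m. dg_mul A (extension (LB.lc_term c m)) (extension b)) ?S"
  proof (rule vsum_cong[OF f])
    fix m assume m: "m \<in> ?S"
    have am: "adm (replicate_mset (count m x) x)" using adm_replicate_count[OF expands_terms(1)[OF c m]] .
    show "extension (dg_mul B (LB.lc_term c m) b) = dg_mul A (extension (LB.lc_term c m)) (extension b)"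
      unfolding expands_terms(3)[OF c m] by (rule extension_mul_term_left[OF expands_terms(2)[OF c m] am b])
  qed
  also have "\<dots> = dg_mul A (vsum A (\<lambda>m. extension (LB.lc_term c m)) ?S) (extension b)"
    using A.vsum_distrib_right[OF f _ extension_closed[OF b], of "\<lambda>m. extension (LB.lc_term c m)" p] extension_closed tp by blast
  also have "\<dots> = dg_mul A (extension a) (extension b)" using extension_expand[OF a c] by simp
  finally show ?thesis .
qed

lemma adm_replicate_0: "adm (replicate_mset 0 x)" using adm_iff[of 0] by (simp del: replicate_mset_0)
lemma adm_replicate_1: "adm (replicate_mset 1 x)" using adm_iff[of 1] by (simp del: replicate_mset_Suc replicate_mset_0)

lemma extension_j: assumes c: "c \<in> dg_elems B' s" shows "extension (j c) = h' c"
  using extension_monomial_term[OF c adm_replicate_0] B.mul_one[OF j_closed[OF c]] A.mul_one[OF h'_closed[OF c]] by simp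

lemma extension_one: "extension (dg_one B) = dg_one A"
  using extension_j[OF B'.one_closed] dgmor_one[OF j] dgmor_one[OF h'] by simp

lemma extension_x: "extension x = e"
proof -
  have "dg_mul B (j (dg_one B')) (dg_pow B x 1) = x"
    using dgmor_one[OF j] B.mul_one[OF xr] B.one_mul[OF xr] by (simp add: dg_pow_Suc)
  moreover have "dg_mul A (h' (dg_one B')) (dg_pow A e 1) = e"
    using dgmor_one[OF h'] A.mul_one[OF e] A.one_mul[OF e] by (simp add: dg_pow_Suc)
  ultimately show ?thesis using extension_monomial_term[OF B'.one_closed adm_replicate_1] by simp
qed

lemma extension_pow: "extension (dg_pow B x k) = dg_pow A e k"
proof (induction k)
  case 0 then show ?case using extension_one by simp
next
  case (Suc k)
  then show ?case using extension_mul[OF xr B.dg_pow_closed[OF xr, of k]] extension_x by (simp add: dg_pow_Suc)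
qed

lemma extension_d_pow: "extension (dg_d B (dg_pow B x k)) = dg_d A (dg_pow A e k)"
proof (induction k)
  case 0 then show ?case by simp
next
  case (Suc k)
  let ?P = "dg_pow B x k"
  have Pc: "?P \<in> dg_elems B (int k * r)" using B.dg_pow_closed[OF xr] .
  have dPc: "dg_d B ?P \<in> dg_elems B (int k * r + 1)" using Pc by blast
  have dx: "dg_d B x \<in> dg_elems B (r + 1)" using xr by blast
  let ?N = "r + 1 + int k * r"
  have u: "dg_mul B (dg_d B x) ?P \<in> dg_elems B ?N" using dx Pc by blast
  have v0: "dg_mul B x (dg_d B ?P) \<in> dg_elems B ?N" using xr dPc B.mul_closed'[of x r _ "int k * r + 1" ?N] by simp
  have v: "dg_smul B (sgn_int r) (dg_mul B x (dg_d B ?P)) \<in> dg_elems B ?N" using v0 by blast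
  have Hdx: "extension (dg_d B x) = dg_d A e" using jy[symmetric] extension_j[OF y] de by simp
  have "extension (dg_d B (dg_pow B x (Suc k))) = extension (dg_add B (dg_mul B (dg_d B x) ?P) (dg_smul B (sgn_int r) (dg_mul B x (dg_d B ?P))))"
    unfolding dg_pow_Suc using B.d_mul[OF xr Pc] by simp
  also have "\<dots> = dg_add A (extension (dg_mul B (dg_d B x) ?P)) (dg_smul A (sgn_int r) (extension (dg_mul B x (dg_d B ?P))))"
    using extension_add[OF u v] extension_smul[OF v0] by simp
  also have "\<dots> = dg_add A (dg_mul A (dg_d A e) (dg_pow A e k)) (dg_smul A (sgn_int r) (dg_mul A e (dg_d A (dg_pow A e k))))"
    using extension_mul[OF dx Pc] extension_mul[OF xr dPc] Hdx extension_pow extension_x Suc by simp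
  also have "\<dots> = dg_d A (dg_pow A e (Suc k))"
    unfolding dg_pow_Suc using A.d_mul[OF e A.dg_pow_closed[OF e]] by simp
  finally show ?case .
qed

lemma extension_d_term: assumes c0: "c0 \<in> dg_elems B' s" and a: "adm (replicate_mset k x)"
  shows "extension (dg_d B (dg_mul B (j c0) (dg_pow B x k))) = dg_d A (dg_mul A (h' c0) (dg_pow A e k))"
proof -
  let ?P = "dg_pow B x k"
  have Pc: "?P \<in> dg_elems B (int k * r)" using B.dg_pow_closed[OF xr] .
  have dPc: "dg_d B ?P \<in> dg_elems B (int k * r + 1)" using Pc by blast
  have dc0: "dg_d B' c0 \<in> dg_elems B' (s + 1)" using c0 by blast
  let ?N = "s + 1 + int k * r"
  have u: "dg_mul B (j (dg_d B' c0)) ?P \<in> dg_elems B ?N" using j_closed[OF dc0] Pc by blast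
  have v0: "dg_mul B (j c0) (dg_d B ?P) \<in> dg_elems B ?N"
    using j_closed[OF c0] dPc B.mul_closed'[of "j c0" s _ "int k * r + 1" ?N] by simp
  have v: "dg_smul B (sgn_int s) (dg_mul B (j c0) (dg_d B ?P)) \<in> dg_elems B ?N" using v0 by blast
  have "extension (dg_d B (dg_mul B (j c0) ?P)) = extension (dg_add B (dg_mul B (j (dg_d B' c0)) ?P) (dg_smul B (sgn_int s) (dg_mul B (j c0) (dg_d B ?P))))"
    using B.d_mul[OF j_closed[OF c0] Pc] dgmor_d[OF j c0] by simp
  also have "\<dots> = dg_add A (extension (dg_mul B (j (dg_d B' c0)) ?P)) (dg_smul A (sgn_int s) (extension (dg_mul B (j c0) (dg_d B ?P))))"
    using extension_add[OF u v] extension_smul[OF v0] by simp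
  also have "\<dots> = dg_add A (dg_mul A (dg_d A (h' c0)) (dg_pow A e k)) (dg_smul A (sgn_int s) (dg_mul A (h' c0) (dg_d A (dg_pow A e k))))"
    using extension_monomial_term[OF dc0 a] dgmor_d[OF h' c0] extension_mul[OF j_closed[OF c0] dPc] extension_j[OF c0] extension_d_pow by simp
  also have "\<dots> = dg_d A (dg_mul A (h' c0) (dg_pow A e k))"
    using A.d_mul[OF h'_closed[OF c0] A.dg_pow_closed[OF e]] by simp
  finally show ?thesis .
qed

lemma extension_d: assumes b: "b \<in> dg_elems B n" shows "extension (dg_d B b) = dg_d A (extension b)"
proof -
  obtain c where c: "expands n b c" using expands_ex[OF b] .
  let ?S = "LB.supp c"
  have f: "finite ?S" using c unfolding expands_def LB.admissible_def by blast
  have eb: "b = vsum B (LB.lc_term c) ?S" using c unfolding expands_def by blast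
  have tn: "\<And>m. m \<in> ?S \<Longrightarrow> LB.lc_term c m \<in> dg_elems B n" using expands_terms(4)[OF c] .
  have "dg_d B b = vsum B (\<lambda>m. dg_d B (LB.lc_term c m)) ?S"
    using B.vsum_d[OF f tn] eb by simp
  then have "extension (dg_d B b) = vsum A (\<lambda>m. extension (dg_d B (LB.lc_term c m))) ?S"
  proof -
    assume eq: "dg_d B b = vsum B (\<lambda>m. dg_d B (LB.lc_term c m)) ?S"
    have dn: "\<And>m. m \<in> ?S \<Longrightarrow> dg_d B (LB.lc_term c m) \<in> dg_elems B (n + 1)" using tn by blast
    show ?thesis using extension_vsum[OF f dn] eq by simp
  qed
  also have "\<dots> = vsum A (\<lambda>m. dg_d A (extension (LB.lc_term c m))) ?S"
  proof (rule vsum_cong[OF f])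
    fix m assume m: "m \<in> ?S"
    have am: "adm (replicate_mset (count m x) x)" using adm_replicate_count[OF expands_terms(1)[OF c m]] .
    show "extension (dg_d B (LB.lc_term c m)) = dg_d A (extension (LB.lc_term c m))"
      unfolding expands_terms(3)[OF c m] extension_monomial_term[OF expands_terms(2)[OF c m] am]
      by (rule extension_d_term[OF expands_terms(2)[OF c m] am])
  qed
  also have "\<dots> = dg_d A (vsum A (\<lambda>m. extension (LB.lc_term c m)) ?S)"
    using A.vsum_d[OF f, of "\<lambda>m. extension (LB.lc_term c m)" n] extension_closed tn by blast
  also have "\<dots> = dg_d A (extension b)" using extension_expand[OF b c] by simp
  finally show ?thesis .
qed

lemma extension_dgmor: "dgmor B A extension"
  unfolding dgmor_def
  by (intro conjI allI ballI)
    (simp_all add: extension_closed extension_add extension_smul extension_mul extension_one extension_d)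

end

section \<open>The class of h(y) and exactness\<close>

lemma AOm1_dgmor_zero:
  assumes "dg_algebra B'" "dg_algebra A" "dgmor B' (AOm1 A) g"
  shows "g (dg_zero B') = (\<lambda>_. dg_zero A, \<lambda>_. dg_zero A)"
proof -
  interpret B': dg_algebra B' by fact
  interpret A: dg_algebra A by fact
  obtain p q where g0: "g (dg_zero B') = (p, q)" by (cases "g (dg_zero B')") auto
  have "g (dg_zero B') \<in> dg_elems (AOm1 A) 0" using dgmor_closed[OF assms(3) B'.zero_closed] .
  then have p: "\<And>i. p i \<in> dg_elems A 0" and q: "\<And>i. q i \<in> dg_elems A (0 - 1)"
    unfolding A.AOm1_elems g0 by auto
  have "g (dg_zero B') = g (dg_smul B' 0 (dg_zero B'))" by simp
  also have "\<dots> = dg_smul (AOm1 A) 0 (g (dg_zero B'))"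
    using dgmor_smul[OF assms(3) B'.zero_closed] .
  also have "\<dots> = (\<lambda>_. dg_zero A, \<lambda>_. dg_zero A)"
    unfolding g0 AOm1_def using A.smul_zero_left[OF p] A.smul_zero_left[OF q] by simp
  finally show ?thesis .
qed

context dg_algebra
begin

text \<open>The dt-component of d(p, q) = 0 reads \<plusminus>(i + 1) p(i + 1) + d q(i) = 0, and i + 1 is
  invertible in characteristic 0.\<close>
lemma AOm1_cocycle_coeff_exact:
  assumes pq: "(p, q) \<in> dg_elems (AOm1 D) n"
    and d: "dg_d (AOm1 D) (p, q) = (\<lambda>_. dg_zero D, \<lambda>_. dg_zero D)"
  shows "\<exists>E\<in>dg_elems D (n - 1). p (Suc i) = dg_d D E"
proof -
  have p: "p (Suc i) \<in> dg_elems D n" and q: "q i \<in> dg_elems D (n - 1)"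
    using pq unfolding AOm1_elems by auto
  have dq: "dg_d D (q i) \<in> dg_elems D n" using d_closed'[OF q] by simp
  define s where "s = esgn D (p (Suc i)) * of_nat (Suc i)"
  have s: "s \<noteq> 0" unfolding s_def esgn_def by (metis mult_eq_0_iff of_nat_neq_0 sgn_int_nonzero)
  have "dg_add D (dg_smul D s (p (Suc i))) (dg_d D (q i)) = dg_zero D"
    using d unfolding AOm1_def s_def by (simp add: fun_eq_iff)
  then have "dg_smul D s (p (Suc i)) = dg_smul D (-1) (dg_d D (q i))"
    using add_eq_zero_imp_eq_neg p dq by blast
  then have "dg_smul D (1 / s) (dg_smul D s (p (Suc i))) =
      dg_smul D (1 / s) (dg_smul D (-1) (dg_d D (q i)))"
    by simp
  then have "p (Suc i) = dg_smul D (- (1 / s)) (dg_d D (q i))"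
    using smul_smul[OF p] smul_smul[OF dq] s p by simp
  then have "p (Suc i) = dg_d D (dg_smul D (- (1 / s)) (q i))"
    using d_smul[OF q] by simp
  then show ?thesis using q by blast
qed

lemma AOm1_cocycle_ev_cohomologous:
  assumes pq: "(p, q) \<in> dg_elems (AOm1 D) n"
    and d: "dg_d (AOm1 D) (p, q) = (\<lambda>_. dg_zero D, \<lambda>_. dg_zero D)"
  shows "\<exists>E\<in>dg_elems D (n - 1). dg_add D (ev1 D (p, q)) (dg_smul D (-1) (ev0 (p, q))) = dg_d D E"
proof -
  have p: "\<And>i. p i \<in> dg_elems D n" and fin: "finite {i. p i \<noteq> dg_zero D}"
    using pq unfolding AOm1_elems by auto
  have "\<forall>i. \<exists>E\<in>dg_elems D (n - 1). i \<noteq> 0 \<longrightarrow> p i = dg_d D E"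
    using AOm1_cocycle_coeff_exact[OF pq d] by (metis Suc_pred' not_gr0 zero_closed)
  then obtain E where E: "\<And>i. E i \<in> dg_elems D (n - 1)" and pE: "\<And>i. i \<noteq> 0 \<Longrightarrow> p i = dg_d D (E i)"
    by metis
  let ?S = "{i. p i \<noteq> dg_zero D} - {0}"
  have fS: "finite ?S" using fin by simp
  have "ev1 D (p, q) = vsum D p (insert 0 ?S)"
    unfolding ev1_def fst_conv using fin p by (intro vsum_mono_neutral[symmetric, of _ _ _ n]) auto
  also have "\<dots> = dg_add D (p 0) (vsum D p ?S)"
    using fS p by (intro vsum_insert[of _ _ _ n]) auto
  also have "vsum D p ?S = vsum D (\<lambda>i. dg_d D (E i)) ?S"
    by (rule vsum_cong[OF fS]) (use pE in auto)
  also have "\<dots> = dg_d D (vsum D E ?S)" using vsum_d[OF fS E] .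
  finally have ev1: "ev1 D (p, q) = dg_add D (p 0) (dg_d D (vsum D E ?S))" .
  have V: "vsum D E ?S \<in> dg_elems D (n - 1)" using vsum_closed'[OF fS E] .
  have "dg_d D (vsum D E ?S) \<in> dg_elems D n" using d_closed'[OF V] by simp
  then have "dg_add D (ev1 D (p, q)) (dg_smul D (-1) (ev0 (p, q))) = dg_d D (vsum D E ?S)"
    unfolding ev1 using add_sub_cancel[OF p] by (simp add: ev0_def)
  then show ?thesis using V by blast
qed

end

lemma dgmor_cocycle:
  assumes "dg_algebra B" "dg_algebra A" "dgmor B A h" "cocycle B n y"
  shows "cocycle A n (h y)"
  using assms dgmor_closed[OF assms(3)] dgmor_d[OF assms(3)] dgmor_zero[OF assms(1-3)]
  unfolding cocycle_def by metis

lemma dgmor_AOm1_ev_cohomologous: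
  assumes B': "dg_algebra B'" and A: "dg_algebra A" and g: "dgmor B' (AOm1 A) g"
    and y: "cocycle B' n y"
  shows "\<exists>E\<in>dg_elems A (n - 1). dg_add A (ev1 A (g y)) (dg_smul A (-1) (ev0 (g y))) = dg_d A E"
proof -
  obtain p q where gy: "g y = (p, q)" by (cases "g y") auto
  have yn: "y \<in> dg_elems B' n" and dy: "dg_d B' y = dg_zero B'" using y unfolding cocycle_def by auto
  have "(p, q) \<in> dg_elems (AOm1 A) n" using dgmor_closed[OF g yn] gy by simp
  moreover have "dg_d (AOm1 A) (p, q) = (\<lambda>_. dg_zero A, \<lambda>_. dg_zero A)"
    using dgmor_d[OF g yn] dy AOm1_dgmor_zero[OF B' A g] gy by simp
  ultimately show ?thesis using dg_algebra.AOm1_cocycle_ev_cohomologous[OF A] gy by simp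
qed

lemma hom_edge_cohomologous:
  assumes B': "dg_algebra B'" and A: "dg_algebra A"
    and u: "hom_vtx C B' A \<phi> \<psi> u" and v: "hom_vtx C B' A \<phi> \<psi> v"
    and e: "hom_edge C B' A \<phi> \<psi> u v" and y: "cocycle B' n y"
  shows "cohomologous A n (u y) (v y)"
proof -
  obtain g where g: "dgmor B' (AOm1 A) g"
    and ev: "\<forall>b\<in>dg_carrier B'. ev0 (g b) = u b \<and> ev1 A (g b) = v b"
    using e unfolding hom_edge_def by blast
  have "y \<in> dg_carrier B'" using y unfolding cocycle_def dg_carrier_def by blast
  then have "cohomologous A n (v y) (u y)"
    using dgmor_AOm1_ev_cohomologous[OF B' A g y] ev u v dgmor_cocycle[OF B' A _ y]
    unfolding cohomologous_def hom_vtx_def by auto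
  then show ?thesis using dg_algebra.cohomologous_sym[OF A] by blast
qed

lemma homot_cohomologous:
  assumes B': "dg_algebra B'" and A: "dg_algebra A"
    and hh': "homot C B' A \<phi> \<psi> h h'" and y: "cocycle B' n y"
  shows "cohomologous A n (h y) (h' y)"
proof -
  have h: "hom_vtx C B' A \<phi> \<psi> h"
    and steps: "(\<lambda>u v. hom_vtx C B' A \<phi> \<psi> u \<and> hom_vtx C B' A \<phi> \<psi> v \<and>
            (hom_edge C B' A \<phi> \<psi> u v \<or> hom_edge C B' A \<phi> \<psi> v u))\<^sup>*\<^sup>* h h'"
    using hh' unfolding homot_def by blast+
  from steps show ?thesis
  proof (induction rule: rtranclp_induct)
    case base
    show ?case
      using h dgmor_cocycle[OF B' A _ y] dg_algebra.cohomologous_refl[OF A]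
      unfolding hom_vtx_def by blast
  next
    case (step u v)
    then have "cohomologous A n (u y) (v y)"
      using hom_edge_cohomologous[OF B' A _ _ _ y] dg_algebra.cohomologous_sym[OF A] by blast
    then show ?case using dg_algebra.cohomologous_trans[OF A] step.IH by blast
  qed
qed

lemma dgmor_boundary_cohomologous_zero:
  assumes B: "dg_algebra B" and A: "dg_algebra A" and h: "dgmor B A h"
    and x: "x \<in> dg_elems B (n - 1)"
  shows "cohomologous A n (h (dg_d B x)) (dg_zero A)"
proof -
  interpret A: dg_algebra A by fact
  have "cocycle B n (dg_d B x)"
    using dg_algebra.d_closed'[OF B x] dg_algebra.d_d[OF B x] unfolding cocycle_def by simp
  then have "cocycle A n (h (dg_d B x))" using dgmor_cocycle[OF B A h] by blast
  moreover have "h (dg_d B x) = dg_d A (h x)" using dgmor_d[OF h x] .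
  ultimately show ?thesis
    using dgmor_closed[OF h x] A.cocycle_zero A.add_zero unfolding cohomologous_def cocycle_def
    by auto
qed

lemma dgmor_carrier: "dgmor A B f \<Longrightarrow> a \<in> dg_carrier A \<Longrightarrow> f a \<in> dg_carrier B"
  unfolding dg_carrier_def by (blast intro: dgmor_closed)

lemma hom_edge_const:
  assumes A: "dg_algebra A" and h: "hom_vtx C B A \<phi> \<psi> h"
    and eq: "\<forall>b\<in>dg_carrier B. h0 b = h b"
  shows "hom_edge C B A \<phi> \<psi> h0 h"
  unfolding hom_edge_def
proof (intro exI[of _ "incl_Om A \<circ> h"] conjI ballI)
  have "dgmor B A h" using h unfolding hom_vtx_def by blast
  then show "dgmor B (AOm1 A) (incl_Om A \<circ> h)"
    using dgmor_comp dg_algebra.incl_Om_dgmor[OF A] by blast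
next
  fix c assume "c \<in> dg_carrier C"
  then show "(incl_Om A \<circ> h) (\<phi> c) = incl_Om A (\<psi> c)" using h unfolding hom_vtx_def by simp
next
  fix b assume b: "b \<in> dg_carrier B"
  show "ev0 ((incl_Om A \<circ> h) b) = h0 b" using eq b dg_algebra.ev0_incl[OF A] by simp
  have "h b \<in> dg_carrier A" using dgmor_carrier[of B A h b] b h unfolding hom_vtx_def by blast
  then show "ev1 A ((incl_Om A \<circ> h) b) = h b"
    unfolding dg_carrier_def using dg_algebra.ev1_incl[OF A] by auto
qed

lemma homot_restriction_class_zero:
  assumes B': "dg_algebra B'" and B: "dg_algebra B" and A: "dg_algebra A"
    and x: "x \<in> dg_elems B r" and y: "cocycle B' (r + 1) y" and jy: "j y = dg_d B x"
    and h: "hom_vtx C B A (j \<circ> \<phi>) \<psi> h" and hh': "homot C B' A \<phi> \<psi> (h \<circ> j) h'"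
  shows "cohomologous A (r + 1) (h' y) (dg_zero A)"
proof -
  have "cohomologous A (r + 1) (h (j y)) (h' y)"
    using homot_cohomologous[OF B' A hh' y] by simp
  moreover have "cohomologous A (r + 1) (h (j y)) (dg_zero A)"
    using dgmor_boundary_cohomologous_zero[OF B A, of h x "r + 1"] x h jy
    unfolding hom_vtx_def by simp
  ultimately show ?thesis
    using dg_algebra.cohomologous_sym[OF A] dg_algebra.cohomologous_trans[OF A] by blast
qed

lemma exact_restriction_extends:
  assumes B': "dg_algebra B'" and B: "dg_algebra B" and A: "dg_algebra A"
    and \<phi>: "dgmor C B' \<phi>" and j: "dgmor B' B j" and free: "free_on B' B j {x}"
    and x: "x \<in> dg_elems B r" and y: "y \<in> dg_elems B' (r + 1)" and jy: "j y = dg_d B x"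
    and h'_vtx: "hom_vtx C B' A \<phi> \<psi> h'" and exact: "cohomologous A (r + 1) (h' y) (dg_zero A)"
  shows "\<exists>h. hom_vtx C B A (j \<circ> \<phi>) \<psi> h \<and> homot C B' A \<phi> \<psi> (h \<circ> j) h'"
proof -
  interpret A: dg_algebra A by fact
  obtain e where e: "e \<in> dg_elems A r" and de: "dg_d A e = h' y"
    using exact unfolding cohomologous_def cocycle_def by auto
  have h'm: "dgmor B' A h'" and h'\<phi>: "\<forall>c\<in>dg_carrier C. h' (\<phi> c) = \<psi> c"
    using h'_vtx unfolding hom_vtx_def by blast+
  interpret free_ext B' B A j x r h' e y
    by (intro free_ext.intro free_ext_axioms.intro B' B A j free x h'm e y jy de)
  have Hj: "extension (j b) = h' b" if "b \<in> dg_carrier B'" for b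
    using that extension_j unfolding dg_carrier_def by blast
  have H: "hom_vtx C B A (j \<circ> \<phi>) \<psi> extension"
    unfolding hom_vtx_def using extension_dgmor Hj dgmor_carrier[OF \<phi>] h'\<phi> by simp
  have "hom_vtx C B' A \<phi> \<psi> (extension \<circ> j)"
    unfolding hom_vtx_def using dgmor_comp[OF j extension_dgmor] Hj dgmor_carrier[OF \<phi>] h'\<phi>
    by simp
  moreover have "hom_edge C B' A \<phi> \<psi> (extension \<circ> j) h'"
    using hom_edge_const[OF A h'_vtx] Hj by simp
  ultimately have "homot C B' A \<phi> \<psi> (extension \<circ> j) h'"
    unfolding homot_def using h'_vtx by (intro conjI r_into_rtranclp) auto
  then show ?thesis using H by blast
qed

theorem proposition4p15:
  fixes C :: "('k::field_char_0, 'c) dga" and B' :: "('k, 'b1) dga" and B :: "('k, 'b) dga"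
    and A :: "('k, 'a) dga"
    and \<phi> :: "'c \<Rightarrow> 'b1" and j :: "'b1 \<Rightarrow> 'b" and \<psi> :: "'c \<Rightarrow> 'a"
    and x :: 'b and r :: int
  assumes "resolving_alg C" and "resolving_alg B'" and "resolving_alg B"
    and "resolving C B' \<phi>" and "finite_resolving C B' \<phi>"
    and "r \<le> 0" and "x \<in> dg_elems B r" and "resolving_on B' B j {x}"
    and "dga A" and "dgmor C A \<psi>"
  shows "\<exists>y\<in>dg_elems B' (r + 1). j y = dg_d B x \<and>
     (\<forall>h. hom_vtx C B' A \<phi> \<psi> h \<longrightarrow> cocycle A (r + 1) (h y)) \<and>
     (\<forall>h h'. homot C B' A \<phi> \<psi> h h' \<longrightarrow> cohomologous A (r + 1) (h y) (h' y)) \<and>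
     (\<forall>h'. hom_vtx C B' A \<phi> \<psi> h' \<longrightarrow>
        ((\<exists>h. hom_vtx C B A (j \<circ> \<phi>) \<psi> h \<and> homot C B' A \<phi> \<psi> (h \<circ> j) h')
         \<longleftrightarrow> cohomologous A (r + 1) (h' y) (dg_zero A)))"
proof -
  have B': "dg_algebra B'" and B: "dg_algebra B" and A: "dg_algebra A"
    using assms(2,3,9) unfolding resolving_alg_def dg_algebra_def by blast+
  have j: "dgmor B' B j" and free: "free_on B' B j {x}"
    using assms(8) unfolding resolving_on_def by blast+
  have \<phi>: "dgmor C B' \<phi>" using assms(4) unfolding resolving_def resolving_on_def by blast
  obtain y where y: "y \<in> dg_elems B' (r + 1)" and jy: "j y = dg_d B x"
    using boundary_of_generator_in_base[OF assms(2) B' B j free assms(7,6)] by blast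
  have "j (dg_d B' y) = dg_zero B"
    using dgmor_d[OF j y] jy dg_algebra.d_d[OF B assms(7)] by simp
  then have cocycle_y: "cocycle B' (r + 1) y"
    using free_on_inj[OF B' B j free] dg_algebra.d_closed[OF B' y] y unfolding cocycle_def by blast
  have "\<forall>h. hom_vtx C B' A \<phi> \<psi> h \<longrightarrow> cocycle A (r + 1) (h y)"
    using dgmor_cocycle[OF B' A _ cocycle_y] unfolding hom_vtx_def by blast
  moreover have "\<forall>h h'. homot C B' A \<phi> \<psi> h h' \<longrightarrow> cohomologous A (r + 1) (h y) (h' y)"
    using homot_cohomologous[OF B' A _ cocycle_y] by blast
  moreover have "\<forall>h'. hom_vtx C B' A \<phi> \<psi> h' \<longrightarrow>
      ((\<exists>h. hom_vtx C B A (j \<circ> \<phi>) \<psi> h \<and> homot C B' A \<phi> \<psi> (h \<circ> j) h')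
       \<longleftrightarrow> cohomologous A (r + 1) (h' y) (dg_zero A))"
    using homot_restriction_class_zero[where j = j, OF B' B A assms(7) cocycle_y jy]
      exact_restriction_extends[OF B' B A \<phi> j free assms(7) y jy] by blast
  ultimately show ?thesis using y jy by blast
qed

end
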